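(* Every $n$-qubit unitary stabilizer circuit has an equivalent unitary stabilizer circuit with only $O(n^2/\log n)$ gates.
   Context: A unitary stabilizer circuit is a circuit consisting only of CNOT, Hadamard and phase ($\mathrm{diag}(1,i)$) gates. Two such circuits are equivalent if the unitaries they implement agree up to a global phase. *)

theory Defs
  imports Complex_Main "Jordan_Normal_Form.Matrix"
begin

text \<open>Gates of a unitary stabilizer circuit on qubits 0..n-1.
  CNOT c t has control c and target t.\<close>
datatype gate = H nat | S nat | CNOT nat nat

text \<open>Computational basis states of n qubits are indexed by 0..2^n-1;
  qubit q of basis index j is bit q of j.\<close>
definition bit :: "nat \<Rightarrow> nat \<Rightarrow> bool" where
  "bit j q = odd (j div 2 ^ q)"

definition flip :: "nat \<Rightarrow> nat \<Rightarrow> nat" where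
  "flip j q = (if bit j q then j - 2 ^ q else j + 2 ^ q)"

definition agree_except :: "nat \<Rightarrow> nat \<Rightarrow> nat \<Rightarrow> bool" where
  "agree_except i j q = (\<forall>k. k \<noteq> q \<longrightarrow> bit i k = bit j k)"

definition wf_gate :: "nat \<Rightarrow> gate \<Rightarrow> bool" where
  "wf_gate n g = (case g of H q \<Rightarrow> q < n | S q \<Rightarrow> q < n
     | CNOT c t \<Rightarrow> c < n \<and> t < n \<and> c \<noteq> t)"

definition wf_circuit :: "nat \<Rightarrow> gate list \<Rightarrow> bool" where
  "wf_circuit n gs = (\<forall>g\<in>set gs. wf_gate n g)"

text \<open>Matrix entry (i,j) = <i| G |j>.  Hadamard, phase diag(1,i), CNOT.\<close>
definition gate_entry :: "gate \<Rightarrow> nat \<Rightarrow> nat \<Rightarrow> complex" where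
  "gate_entry g i j = (case g of
      H q \<Rightarrow> (if agree_except i j q
               then (if bit i q \<and> bit j q then -1 else 1) / complex_of_real (sqrt 2)
               else 0)
    | S q \<Rightarrow> (if i = j then (if bit j q then \<i> else 1) else 0)
    | CNOT c t \<Rightarrow> (if i = (if bit j c then flip j t else j) then 1 else 0))"

definition gate_mat :: "nat \<Rightarrow> gate \<Rightarrow> complex mat" where
  "gate_mat n g = mat (2 ^ n) (2 ^ n) (\<lambda>(i, j). gate_entry g i j)"

text \<open>Gates are applied left to right: the first gate of the list acts first.\<close>
fun circuit_mat :: "nat \<Rightarrow> gate list \<Rightarrow> complex mat" where
  "circuit_mat n [] = 1\<^sub>m (2 ^ n)"
| "circuit_mat n (g # gs) = circuit_mat n gs * gate_mat n g"

definition equiv_circuits :: "nat \<Rightarrow> gate list \<Rightarrow> gate list \<Rightarrow> bool" where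
  "equiv_circuits n c1 c2 =
     (\<exists>z::complex. cmod z = 1 \<and> circuit_mat n c1 = z \<cdot>\<^sub>m circuit_mat n c2)"

end

theory Submission
  imports Defs
begin

text \<open>
  Conjugation by a stabilizer circuit maps the Pauli operator \<open>X\<^sup>a Z\<^sup>b\<close> to a phase times
  \<open>X\<^sup>a\<^sup>' Z\<^sup>b\<^sup>'\<close>, where \<open>(a', b')\<close> depends GF(2)-linearly and symplectically on the bit masks
  \<open>(a, b)\<close>.  Two circuits inducing the same map differ by a Pauli operator up to a global
  phase, since only scalar multiples of Pauli operators commute up to scalars with every
  \<open>X\<^sub>q\<close> and \<open>Z\<^sub>q\<close>; that Pauli operator costs \<open>O(n)\<close> gates.

  Every such map is also realised by a circuit consisting of CNOT and phase gates, then a layer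
  of Hadamards, then again CNOT and phase gates.  A CNOT-phase circuit acts as a CNOT circuit
  followed by \<open>(x, z) \<mapsto> (x, z + F x)\<close> with \<open>F\<close> symmetric.  Choosing a unitriangular
  \<open>L\<close> whose Gram matrix agrees with \<open>F\<close> off the diagonal, the circuit
  \<open>L; S\<^sup>\<otimes>\<^sup>n; L\<^sup>-\<^sup>1\<close> followed by a layer of phase gates realises \<open>F\<close>.  So everything reduces to
  synthesising invertible GF(2) matrices from CNOTs, and the Patel-Markov-Hayes algorithm
  does this with \<open>O(n\<^sup>2 / log n)\<close> gates: it eliminates blocks of \<open>m \<approx> log\<^sub>4 n\<close> columns at
  once, first cancelling duplicate row patterns inside the block, of which there are at
  most \<open>2\<^sup>m\<close>.
\<close>

unbundle bit_operations_syntax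

section \<open>Bit masks\<close>

text \<open>The name \<open>bit\<close> of the library is shadowed by \<^const>\<open>Defs.bit\<close>.\<close>
abbreviation bt :: "nat \<Rightarrow> nat \<Rightarrow> bool" where "bt \<equiv> Bit_Operations.bit"

lemma Defs_bit_eq[simp]: "Defs.bit j q = bt j q"
  by (simp add: Defs.bit_def bit_iff_odd)

lemma add_exp_eq_xor: "\<not> bt (j::nat) q \<Longrightarrow> j + 2^q = j XOR 2^q"
proof -
  assume a: "\<not> bt (j::nat) q"
  have "set_bit q j = j XOR 2^q"
    by (rule bit_eqI) (auto simp: bit_set_bit_iff bit_xor_iff bit_exp_iff a)
  then show ?thesis using set_bit_eq[of q j] a by simp
qed

lemma flip_eq_xor: "flip j q = j XOR 2^q"
proof (cases "bt j q")
  case True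
  define j' where "j' = unset_bit q j"
  have "\<not> bt j' q" by (simp add: j'_def bit_unset_bit_iff)
  moreover have "j' XOR 2^q = j"
    by (rule bit_eqI) (auto simp: j'_def bit_unset_bit_iff bit_xor_iff bit_exp_iff True)
  ultimately show ?thesis using True add_exp_eq_xor[of j' q] by (auto simp: flip_def xor.assoc)
next
  case False
  then show ?thesis by (simp add: flip_def add_exp_eq_xor)
qed

lemma xor_cancel[simp]:
  "((x::nat) XOR y) XOR y = x" "(y XOR x) XOR y = x" "y XOR (y XOR x) = x" "y XOR (x XOR y) = x"
  by (metis xor.assoc xor.commute xor_self_eq xor.left_neutral xor.right_neutral)+

lemma eq_xor_iff: "(i::nat) = j XOR a \<longleftrightarrow> j = i XOR a"
  by auto

lemma less_exp_bitD: "(x::nat) < 2^n \<Longrightarrow> bt x q \<Longrightarrow> q < n"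
  by (metis bit_take_bit_iff take_bit_nat_eq_self_iff)

lemma less_expI: "(\<And>q. bt (x::nat) q \<Longrightarrow> q < n) \<Longrightarrow> x < 2^n"
proof -
  assume a: "\<And>q. bt (x::nat) q \<Longrightarrow> q < n"
  have "take_bit n x = x" by (rule bit_eqI) (auto simp: bit_take_bit_iff dest: a)
  then show ?thesis by (metis take_bit_nat_eq_self_iff)
qed

lemma less_exp_mono: "(x::nat) < 2^k \<Longrightarrow> k \<le> n \<Longrightarrow> x < 2^n"
  by (meson less_le_trans one_le_numeral power_increasing)

lemma xor_less_exp[simp]: "(x::nat) < 2^n \<Longrightarrow> y < 2^n \<Longrightarrow> x XOR y < 2^n"
  by (rule less_expI) (auto simp: bit_xor_iff dest: less_exp_bitD)

lemma and_less_exp_left: "(x::nat) < 2^n \<Longrightarrow> x AND y < 2^n"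
  by (rule less_expI) (auto simp: bit_and_iff dest: less_exp_bitD)

lemma bit_eq_less_expI:
  "(x::nat) < 2^n \<Longrightarrow> y < 2^n \<Longrightarrow> (\<And>q. q < n \<Longrightarrow> bt x q = bt y q) \<Longrightarrow> x = y"
  by (rule bit_eqI) (metis less_exp_bitD)

lemma exists_bit_nonzero: "(x::nat) \<noteq> 0 \<Longrightarrow> \<exists>i. bt x i"
proof (rule ccontr)
  assume "x \<noteq> 0" "\<not> (\<exists>i. bt x i)"
  then have "x = 0" by (intro bit_eqI) auto
  then show False using \<open>x \<noteq> 0\<close> by simp
qed

lemma and_xor_distrib: "(x::nat) AND (y XOR z) = (x AND y) XOR (x AND z)"
  by (rule bit_eqI) (auto simp: bit_and_iff bit_xor_iff)

lemma and_xor_distrib2: "((y::nat) XOR z) AND x = (y AND x) XOR (z AND x)"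
  by (rule bit_eqI) (auto simp: bit_and_iff bit_xor_iff)

fun of_bits :: "nat \<Rightarrow> (nat \<Rightarrow> bool) \<Rightarrow> nat" where
  "of_bits 0 P = 0"
| "of_bits (Suc k) P = of_bits k P XOR (if P k then 2^k else 0)"

lemma bit_of_bits: "bt (of_bits k P) q = (q < k \<and> P q)"
  by (induction k) (auto simp: bit_xor_iff bit_exp_iff less_Suc_eq)

lemma of_bits_less_exp: "of_bits k P < 2^k"
  by (rule less_expI) (simp add: bit_of_bits)

lemma of_bits_bit: "a < 2^n \<Longrightarrow> of_bits n (bt a) = a"
  by (rule bit_eq_less_expI[OF of_bits_less_exp]) (auto simp: bit_of_bits)

fun mask :: "nat list \<Rightarrow> nat" where
  "mask [] = 0"
| "mask (t # ts) = 2^t XOR mask ts"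

lemma bit_mask: "distinct ts \<Longrightarrow> bt (mask ts) k = (k \<in> set ts)"
  by (induction ts) (auto simp: bit_xor_iff bit_exp_iff)

text \<open>\<open>parity n (x AND y)\<close> is the GF(2) inner product of vectors of length \<open>n\<close>.\<close>
fun parity :: "nat \<Rightarrow> nat \<Rightarrow> bool" where
  "parity 0 x = False"
| "parity (Suc n) x = (parity n x \<noteq> bt x n)"

lemma parity_xor: "parity n (x XOR y) = (parity n x \<noteq> parity n y)"
  by (induction n) (auto simp: bit_xor_iff)

lemma parity_0[simp]: "parity n 0 = False"
  by (induction n) auto

lemma parity_exp: "parity n (2^q) = (q < n)"
  by (induction n) (auto simp: bit_exp_iff)

lemma parity_and_exp: "parity n (x AND 2^q) = (q < n \<and> bt x q)"
proof -
  have "x AND 2^q = (if bt x q then 2^q else 0)"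
    by (rule bit_eqI) (auto simp: bit_and_iff bit_exp_iff)
  then show ?thesis by (simp add: parity_exp)
qed

lemma parity_exp_and: "parity n (2^q AND x) = (q < n \<and> bt x q)"
  by (simp add: and.commute[of "2^q" x] parity_and_exp)

lemma parity_cong: "(\<forall>k<n. bt x k = bt y k) \<Longrightarrow> parity n x = parity n y"
  by (induction n) auto

section \<open>Pauli matrices and their conjugation by gates\<close>

lemma eq_square_matI: "A \<in> carrier_mat N N \<Longrightarrow> B \<in> carrier_mat N N \<Longrightarrow> (\<And>i j. i<N \<Longrightarrow> j<N \<Longrightarrow> A$$(i,j) = B$$(i,j)) \<Longrightarrow> A = B"
  by (rule eq_matI) auto

lemma assoc_square: "A \<in> carrier_mat N N \<Longrightarrow> B \<in> carrier_mat N N \<Longrightarrow> C \<in> carrier_mat N N \<Longrightarrow> A * B * C = A * (B * C)"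
  by (rule assoc_mult_mat) auto

lemma mult_smult_square: "A \<in> carrier_mat N N \<Longrightarrow> B \<in> carrier_mat N N \<Longrightarrow> A * (k \<cdot>\<^sub>m B) = (k :: 'a :: comm_semiring_0) \<cdot>\<^sub>m (A * B)"
  by (rule mult_smult_distrib) auto

lemma smult_mult_square: "A \<in> carrier_mat N N \<Longrightarrow> B \<in> carrier_mat N N \<Longrightarrow> (k \<cdot>\<^sub>m A) * B = (k :: 'a :: comm_semiring_0) \<cdot>\<^sub>m (A * B)"
  by (rule mult_smult_assoc_mat) auto

lemma mult_square_carrier: "A \<in> carrier_mat N N \<Longrightarrow> B \<in> carrier_mat N N \<Longrightarrow> A * B \<in> carrier_mat N N"
  by auto

lemma smult_smult_mat: "a \<cdot>\<^sub>m (b \<cdot>\<^sub>m A) = (a * b :: 'a :: semigroup_mult) \<cdot>\<^sub>m A"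
  by (rule eq_matI) (auto simp: mult.assoc)

lemma smult_one_mat: "1 \<cdot>\<^sub>m (A :: 'a :: monoid_mult mat) = A"
  by (rule eq_matI) auto

lemma mult_index_single_col:
  assumes A: "A \<in> carrier_mat N N" and B: "B \<in> carrier_mat N N" and ij: "i < N" "j < N" "p < N"
    and Bj: "\<And>k. k < N \<Longrightarrow> B $$ (k,j) = (if k = p then c else 0)"
  shows "(A*B) $$ (i,j) = A $$ (i, p) * c"
proof -
  have "(A*B) $$ (i,j) = (\<Sum>k\<in>{0..<N}. A$$(i,k) * B$$(k,j))"
    using A B ij by (simp add: scalar_prod_def)
  also have "\<dots> = (\<Sum>k\<in>{0..<N}. if k = p then A$$(i,k) * c else 0)"
    by (rule sum.cong) (auto simp: Bj)
  also have "\<dots> = A$$(i,p) * c" using ij by (simp add: sum.delta)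
  finally show ?thesis .
qed

lemma mult_index_single_row:
  assumes A: "A \<in> carrier_mat N N" and B: "B \<in> carrier_mat N N" and ij: "i < N" "j < N" "p < N"
    and Ai: "\<And>k. k < N \<Longrightarrow> A $$ (i,k) = (if k = p then c else 0)"
  shows "(A*B) $$ (i,j) = c * B $$ (p, j)"
proof -
  have "(A*B) $$ (i,j) = (\<Sum>k\<in>{0..<N}. A$$(i,k) * B$$(k,j))"
    using A B ij by (simp add: scalar_prod_def)
  also have "\<dots> = (\<Sum>k\<in>{0..<N}. if k = p then c * B$$(k,j) else 0)"
    by (rule sum.cong) (auto simp: Ai)
  also have "\<dots> = c * B$$(p,j)" using ij by (simp add: sum.delta)
  finally show ?thesis .
qed

lemma gate_mat_carrier[simp]: "gate_mat n g \<in> carrier_mat (2^n) (2^n)"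
  by (simp add: gate_mat_def)

lemma gate_mat_dim[simp]: "dim_row (gate_mat n g) = 2^n" "dim_col (gate_mat n g) = 2^n"
  by (auto simp: gate_mat_def)

lemma circuit_mat_carrier[simp]: "circuit_mat n c \<in> carrier_mat (2^n) (2^n)"
  by (induction c) auto

lemma circuit_mat_dim[simp]: "dim_row (circuit_mat n c) = 2^n" "dim_col (circuit_mat n c) = 2^n"
  using circuit_mat_carrier[of n c] by (auto simp del: circuit_mat_carrier)

lemma circuit_mat_append: "circuit_mat n (x @ y) = circuit_mat n y * circuit_mat n x"
  by (induction x) (auto simp: assoc_mult_mat[OF circuit_mat_carrier circuit_mat_carrier gate_mat_carrier])

definition dot_sign :: "nat \<Rightarrow> nat \<Rightarrow> nat \<Rightarrow> complex" where
  "dot_sign n b j = (if parity n (b AND j) then -1 else 1)"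

lemma dot_sign_xor_right: "dot_sign n b (j XOR y) = dot_sign n b j * dot_sign n b y"
  by (simp add: dot_sign_def and_xor_distrib parity_xor)

lemma dot_sign_xor_left: "dot_sign n (b XOR y) j = dot_sign n b j * dot_sign n y j"
  by (simp add: dot_sign_def and_xor_distrib2 parity_xor)

lemma dot_sign_exp_right: "dot_sign n b (2^q) = (if q < n \<and> bt b q then -1 else 1)"
  by (simp add: dot_sign_def parity_and_exp)

lemma dot_sign_exp_left: "dot_sign n (2^q) j = (if q < n \<and> bt j q then -1 else 1)"
  by (simp add: dot_sign_def parity_and_exp and.commute)

lemma dot_sign_0[simp]: "dot_sign n 0 j = 1" "dot_sign n b 0 = 1"
  by (auto simp: dot_sign_def)

lemma dot_sign_square[simp]: "dot_sign n b j * dot_sign n b j = 1"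
  by (simp add: dot_sign_def)

text \<open>\<open>pauli n a b\<close> is \<open>X\<^sup>a Z\<^sup>b\<close>: it maps the basis vector \<open>|j\<rangle>\<close> to \<open>(-1)\<^sup>b\<^sup>\<cdot>\<^sup>j |j XOR a\<rangle>\<close>.\<close>
definition pauli :: "nat \<Rightarrow> nat \<Rightarrow> nat \<Rightarrow> complex mat" where
  "pauli n a b = mat (2^n) (2^n) (\<lambda>(i,j). if i = j XOR a then dot_sign n b j else 0)"

lemma pauli_carrier[simp]: "pauli n a b \<in> carrier_mat (2^n) (2^n)"
  by (simp add: pauli_def)

lemma pauli_dim[simp]: "dim_row (pauli n a b) = 2^n" "dim_col (pauli n a b) = 2^n"
  by (auto simp: pauli_def)

lemmas square_carriers = pauli_carrier gate_mat_carrier circuit_mat_carrier mult_square_carrier smult_carrier_mat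

lemma pauli_index: "i < 2^n \<Longrightarrow> j < 2^n \<Longrightarrow> pauli n a b $$ (i,j) = (if i = j XOR a then dot_sign n b j else 0)"
  by (simp add: pauli_def)

lemma mult_pauli_index:
  assumes "A \<in> carrier_mat (2^n) (2^n)" "i < 2^n" "j < 2^n" "a < 2^n"
  shows "(A * pauli n a b) $$ (i,j) = A $$ (i, j XOR a) * dot_sign n b j"
  by (rule mult_index_single_col[OF assms(1) pauli_carrier]) (use assms in \<open>auto simp: pauli_index\<close>)

lemma pauli_mult_index:
  assumes "B \<in> carrier_mat (2^n) (2^n)" "i < 2^n" "j < 2^n" "a < 2^n"
  shows "(pauli n a b * B) $$ (i,j) = dot_sign n b (i XOR a) * B $$ (i XOR a, j)"
  by (rule mult_index_single_row[OF pauli_carrier assms(1)]) (use assms in \<open>auto simp: pauli_index eq_xor_iff\<close>)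

lemma pauli_0_0: "pauli n 0 0 = 1\<^sub>m (2^n)"
  by (rule eq_matI) (auto simp: pauli_def)

lemma pauli_mult: "a < 2^n \<Longrightarrow> a' < 2^n \<Longrightarrow> pauli n a b * pauli n a' b' = dot_sign n b a' \<cdot>\<^sub>m pauli n (a XOR a') (b XOR b')"
proof (rule eq_square_matI[where N="2^n"])
  fix i j :: nat assume ij: "i < 2^n" "j < 2^n" and a: "a < 2^n" "a' < 2^n"
  have "(pauli n a b * pauli n a' b') $$ (i,j) = dot_sign n b (i XOR a) * pauli n a' b' $$ (i XOR a, j)"
    using ij a by (intro pauli_mult_index) auto
  also have "\<dots> = (dot_sign n b a' \<cdot>\<^sub>m pauli n (a XOR a') (b XOR b')) $$ (i,j)"
  proof (cases "i = j XOR (a XOR a')")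
    case True
    then have "i XOR a = j XOR a'" by (metis xor.assoc xor.commute xor_cancel(1))
    then show ?thesis using ij a True
      by (simp add: pauli_index dot_sign_xor_left dot_sign_xor_right xor.assoc xor.left_commute[of a a'])
  next
    case False
    then have "i XOR a \<noteq> j XOR a'" by (metis xor.assoc xor.commute xor_cancel(1))
    then show ?thesis using ij a False by (simp add: pauli_index)
  qed
  finally show "(pauli n a b * pauli n a' b') $$ (i,j) = (dot_sign n b a' \<cdot>\<^sub>m pauli n (a XOR a') (b XOR b')) $$ (i,j)" .
qed auto

definition cnot_map :: "nat \<Rightarrow> nat \<Rightarrow> nat \<Rightarrow> nat" where
  "cnot_map c t x = (if bt x c then x XOR 2^t else x)"

lemma bit_cnot_map: "c \<noteq> t \<Longrightarrow> bt (cnot_map c t x) k = (if k = t then bt x t \<noteq> bt x c else bt x k)"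
  by (auto simp: cnot_map_def bit_xor_iff bit_exp_iff)

lemma cnot_map_cnot_map[simp]: "c \<noteq> t \<Longrightarrow> cnot_map c t (cnot_map c t x) = x"
  by (rule bit_eqI) (auto simp: bit_cnot_map)

lemma cnot_map_xor: "c \<noteq> t \<Longrightarrow> cnot_map c t (x XOR y) = cnot_map c t x XOR cnot_map c t y"
  by (rule bit_eqI) (auto simp: bit_cnot_map bit_xor_iff)

lemma cnot_map_less_exp[simp]: "c < n \<Longrightarrow> t < n \<Longrightarrow> x < 2^n \<Longrightarrow> cnot_map c t x < 2^n"
  by (simp add: cnot_map_def)

lemma cnot_map_eq_iff: "c \<noteq> t \<Longrightarrow> (i = cnot_map c t k) = (k = cnot_map c t i)"
  by auto

lemma inj_cnot_map: "c \<noteq> t \<Longrightarrow> inj (cnot_map c t)"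
  by (metis cnot_map_cnot_map injI)

lemma dot_sign_cnot_map: "c < n \<Longrightarrow> t < n \<Longrightarrow> c \<noteq> t \<Longrightarrow> dot_sign n (cnot_map t c b) (cnot_map c t j) = dot_sign n b j"
proof -
  assume ct: "c < n" "t < n" "c \<noteq> t"
  have "cnot_map t c b AND cnot_map c t j = (b AND j) XOR (if bt b t \<and> bt j c then 2^c XOR 2^t else 0)"
    by (rule bit_eqI) (use ct in \<open>auto simp: bit_cnot_map bit_and_iff bit_xor_iff bit_exp_iff\<close>)
  then show ?thesis using ct by (simp add: dot_sign_def parity_xor parity_exp)
qed

lemma S_mat_index: "i < 2^n \<Longrightarrow> j < 2^n \<Longrightarrow>
   gate_mat n (S q) $$ (i,j) = (if i = j then (if bt j q then \<i> else 1) else 0)"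
  by (simp add: gate_mat_def gate_entry_def)

lemma CNOT_mat_index: "i < 2^n \<Longrightarrow> j < 2^n \<Longrightarrow>
   gate_mat n (CNOT c t) $$ (i,j) = (if i = cnot_map c t j then 1 else 0)"
  by (simp add: gate_mat_def gate_entry_def cnot_map_def flip_eq_xor)

lemma agree_except_iff: "agree_except i j q = (j = i \<or> j = i XOR 2^q)"
proof
  assume a: "agree_except i j q"
  show "j = i \<or> j = i XOR 2^q"
  proof (cases "bt i q = bt j q")
    case True
    then have "j = i" using a by (auto simp: agree_except_def intro!: bit_eqI)
    then show ?thesis by simp
  next
    case False
    then have "j = i XOR 2^q" using a
      by (intro bit_eqI) (auto simp: agree_except_def bit_xor_iff bit_exp_iff)
    then show ?thesis by simp
  qed
next
  assume "j = i \<or> j = i XOR 2^q"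
  then show "agree_except i j q"
    by (auto simp: agree_except_def bit_xor_iff bit_exp_iff)
qed

definition hadamard_entry :: "nat \<Rightarrow> nat \<Rightarrow> nat \<Rightarrow> complex" where
  "hadamard_entry q i j = (if j = i \<or> j = i XOR 2^q then (if bt i q \<and> bt j q then -1 else 1) / complex_of_real (sqrt 2) else 0)"

lemma H_mat_index: "i < 2^n \<Longrightarrow> j < 2^n \<Longrightarrow> gate_mat n (H q) $$ (i,j) = hadamard_entry q i j"
  by (simp add: gate_mat_def gate_entry_def agree_except_iff hadamard_entry_def)

text \<open>Conjugation by a gate maps \<open>X\<^sup>a Z\<^sup>b\<close> to a multiple of \<open>X\<^sup>a\<^sup>' Z\<^sup>b\<^sup>'\<close> with
  \<open>(a', b') = gate_action g (a, b)\<close>; the Hadamard gate swaps bit \<open>q\<close> of \<open>a\<close> and \<open>b\<close>.\<close>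
fun gate_action :: "gate \<Rightarrow> nat \<times> nat \<Rightarrow> nat \<times> nat" where
  "gate_action (H q) (a,b) = (if bt a q \<noteq> bt b q then (a XOR 2^q, b XOR 2^q) else (a,b))"
| "gate_action (S q) (a,b) = (a, if bt a q then b XOR 2^q else b)"
| "gate_action (CNOT c t) (a,b) = (cnot_map c t a, cnot_map t c b)"

lemma S_conj_pauli:
  assumes "q < n" "a < 2^n" "b < 2^n"
  shows "gate_mat n (S q) * pauli n a b = (if bt a q then \<i> else 1) \<cdot>\<^sub>m (pauli n a (snd (gate_action (S q) (a,b))) * gate_mat n (S q))"
proof -
  define b' where "b' = (if bt a q then b XOR 2^q else b)"
  have fgS: "snd (gate_action (S q) (a,b)) = b'" by (simp add: b'_def)
  have b'lt: "b' < 2^n" using assms by (simp add: b'_def)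
  show ?thesis unfolding fgS
  proof (rule eq_square_matI[where N="2^n"])
    fix i j :: nat assume ij: "i < 2^n" "j < 2^n"
    have L: "(gate_mat n (S q) * pauli n a b) $$ (i,j) = gate_mat n (S q) $$ (i, j XOR a) * dot_sign n b j"
      using assms ij by (intro mult_pauli_index) auto
    have R: "(pauli n a b' * gate_mat n (S q)) $$ (i,j)
       = pauli n a b' $$ (i,j) * (if bt j q then \<i> else 1)"
      using assms ij by (intro mult_index_single_col[where p=j]) (auto simp: S_mat_index)
    have "gate_mat n (S q) $$ (i, j XOR a) * dot_sign n b j = (if bt a q then \<i> else 1) * (pauli n a b' $$ (i,j) * (if bt j q then \<i> else 1))"
      using ij assms by (simp add: b'_def S_mat_index pauli_index dot_sign_xor_left dot_sign_exp_left bit_xor_iff) (auto simp: algebra_simps)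
    then show "(gate_mat n (S q) * pauli n a b) $$ (i,j) = ((if bt a q then \<i> else 1) \<cdot>\<^sub>m (pauli n a b' * gate_mat n (S q))) $$ (i,j)"
      using ij unfolding L by (subst index_smult_mat) (auto simp: R simp del: index_mult_mat(1))
  qed (use b'lt in auto)
qed

lemma CNOT_conj_pauli:
  assumes "c < n" "t < n" "c \<noteq> t" "a < 2^n" "b < 2^n"
  shows "gate_mat n (CNOT c t) * pauli n a b = 1 \<cdot>\<^sub>m (pauli n (cnot_map c t a) (cnot_map t c b) * gate_mat n (CNOT c t))"
proof (rule eq_square_matI[where N="2^n"])
  fix i j :: nat assume ij: "i < 2^n" "j < 2^n"
  have L: "(gate_mat n (CNOT c t) * pauli n a b) $$ (i,j) = 1 * pauli n a b $$ (cnot_map c t i, j)"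
    using assms ij by (intro mult_index_single_row) (auto simp: CNOT_mat_index cnot_map_eq_iff)
  have R: "(pauli n (cnot_map c t a) (cnot_map t c b) * gate_mat n (CNOT c t)) $$ (i,j)
     = pauli n (cnot_map c t a) (cnot_map t c b) $$ (i,cnot_map c t j) * 1"
    using assms ij by (intro mult_index_single_col) (auto simp: CNOT_mat_index)
  have e: "(cnot_map c t i = j XOR a) = (i = cnot_map c t j XOR cnot_map c t a)"
    using assms by (metis cnot_map_cnot_map cnot_map_xor)
  show "(gate_mat n (CNOT c t) * pauli n a b) $$ (i,j) = (1 \<cdot>\<^sub>m (pauli n (cnot_map c t a) (cnot_map t c b) * gate_mat n (CNOT c t))) $$ (i,j)"
    using ij assms unfolding L by (simp add: R pauli_index e dot_sign_cnot_map)
qed auto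

lemma H_conj_pauli:
  assumes "q < n" "a < 2^n" "b < 2^n"
  shows "gate_mat n (H q) * pauli n a b = (if bt a q \<and> bt b q then -1 else 1) \<cdot>\<^sub>m (pauli n (fst (gate_action (H q) (a,b))) (snd (gate_action (H q) (a,b))) * gate_mat n (H q))"
proof (rule eq_square_matI[where N="2^n"])
  define e where "e = (if bt a q \<noteq> bt b q then 2^q else (0::nat))"
  have fe: "gate_action (H q) (a,b) = (a XOR e, b XOR e)" by (simp add: e_def)
  have e_lt: "e < 2^n" using assms by (simp add: e_def)
  fix i j :: nat assume ij: "i < 2^n" "j < 2^n"
  have L: "(gate_mat n (H q) * pauli n a b) $$ (i,j) = hadamard_entry q i (j XOR a) * dot_sign n b j"
    using assms ij by (subst mult_pauli_index) (auto simp: H_mat_index)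
  have R: "(pauli n (a XOR e) (b XOR e) * gate_mat n (H q)) $$ (i,j)
     = dot_sign n (b XOR e) (i XOR (a XOR e)) * hadamard_entry q (i XOR (a XOR e)) j"
    using assms ij e_lt by (subst pauli_mult_index) (auto simp: H_mat_index)
  have "hadamard_entry q i (j XOR a) * dot_sign n b j = (if bt a q \<and> bt b q then -1 else 1) * (dot_sign n (b XOR e) (i XOR (a XOR e)) * hadamard_entry q (i XOR (a XOR e)) j)"
  proof (cases "j XOR a = i")
    case True
    then have i: "i = j XOR a" by simp
    show ?thesis unfolding i using assms
      by (auto simp: hadamard_entry_def dot_sign_xor_left dot_sign_xor_right dot_sign_exp_left dot_sign_exp_right bit_xor_iff bit_exp_iff e_def xor_cancel xor.assoc)
  next
    case F1: False
    show ?thesis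
    proof (cases "j XOR a = i XOR 2^q")
      case True
      have "i = (i XOR 2^q) XOR 2^q" by (simp add: xor.assoc)
      also have "\<dots> = (j XOR a) XOR 2^q" using True by simp
      also have "\<dots> = j XOR a XOR 2^q" by (simp add: xor.assoc)
      finally have i: "i = j XOR a XOR 2^q" .
      show ?thesis unfolding i using assms
        by (auto simp: hadamard_entry_def dot_sign_xor_left dot_sign_xor_right dot_sign_exp_left dot_sign_exp_right bit_xor_iff bit_exp_iff e_def xor_cancel xor.assoc)
    next
      case False
      have "j \<noteq> i XOR (a XOR e) \<and> j \<noteq> (i XOR (a XOR e)) XOR 2^q"
        using F1 False by (auto simp: e_def xor.assoc xor.left_commute xor.commute xor_cancel split: if_splits)
      then show ?thesis using F1 False by (simp add: hadamard_entry_def)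
    qed
  qed
  then show "(gate_mat n (H q) * pauli n a b) $$ (i,j) = ((if bt a q \<and> bt b q then -1 else 1) \<cdot>\<^sub>m (pauli n (fst (gate_action (H q) (a,b))) (snd (gate_action (H q) (a,b))) * gate_mat n (H q))) $$ (i,j)"
    using ij unfolding L fe by (simp add: R)
qed auto

lemma gate_action_less_exp:
  assumes "wf_gate n g" "a < 2^n" "b < 2^n"
  shows "fst (gate_action g (a,b)) < 2^n \<and> snd (gate_action g (a,b)) < 2^n"
  using assms by (cases g) (simp_all add: wf_gate_def)

lemma gate_conj_pauli:
  assumes "wf_gate n g" "a < 2^n" "b < 2^n"
  shows "\<exists>l. cmod l = 1 \<and> gate_mat n g * pauli n a b = l \<cdot>\<^sub>m (pauli n (fst (gate_action g (a,b))) (snd (gate_action g (a,b))) * gate_mat n g)"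
proof (cases g)
  case (H q)
  then show ?thesis using H_conj_pauli[of q n a b] assms
    by (intro exI[of _ "if bt a q \<and> bt b q then -1 else 1"]) (auto simp: wf_gate_def)
next
  case (S q)
  then show ?thesis using S_conj_pauli[of q n a b] assms
    by (intro exI[of _ "if bt a q then \<i> else 1"]) (auto simp: wf_gate_def)
next
  case (CNOT c t)
  then show ?thesis using CNOT_conj_pauli[of c n t a b] assms
    by (intro exI[of _ 1]) (auto simp: wf_gate_def)
qed

fun circuit_action :: "gate list \<Rightarrow> nat \<times> nat \<Rightarrow> nat \<times> nat" where
  "circuit_action [] v = v"
| "circuit_action (g # gs) v = circuit_action gs (gate_action g v)"

lemma circuit_action_append: "circuit_action (x @ y) v = circuit_action y (circuit_action x v)"
  by (induction x arbitrary: v) auto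

lemma circuit_action_less_exp:
  assumes "wf_circuit n c" "a < 2^n" "b < 2^n"
  shows "fst (circuit_action c (a,b)) < 2^n \<and> snd (circuit_action c (a,b)) < 2^n"
  using assms
proof (induction c arbitrary: a b)
  case Nil then show ?case by simp
next
  case (Cons g gs)
  have "wf_gate n g" "wf_circuit n gs" using Cons.prems by (auto simp: wf_circuit_def)
  then show ?case using Cons gate_action_less_exp[of n g a b] by (cases "gate_action g (a,b)") auto
qed

lemma circuit_conj_pauli:
  assumes "wf_circuit n c" "a < 2^n" "b < 2^n"
  shows "\<exists>l. cmod l = 1 \<and> circuit_mat n c * pauli n a b = l \<cdot>\<^sub>m (pauli n (fst (circuit_action c (a,b))) (snd (circuit_action c (a,b))) * circuit_mat n c)"
  using assms
proof (induction c arbitrary: a b)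
  case Nil then show ?case by (intro exI[of _ 1]) auto
next
  case (Cons g gs)
  have wg: "wf_gate n g" and wgs: "wf_circuit n gs" using Cons.prems by (auto simp: wf_circuit_def)
  obtain a' b' where ab': "gate_action g (a,b) = (a',b')" by (cases "gate_action g (a,b)")
  have lt: "a' < 2^n" "b' < 2^n" using gate_action_less_exp[OF wg Cons.prems(2,3)] ab' by auto
  obtain l1 where l1: "cmod l1 = 1" "gate_mat n g * pauli n a b = l1 \<cdot>\<^sub>m (pauli n a' b' * gate_mat n g)"
    using gate_conj_pauli[OF wg Cons.prems(2,3)] ab' by auto
  obtain l2 where l2: "cmod l2 = 1" "circuit_mat n gs * pauli n a' b' = l2 \<cdot>\<^sub>m (pauli n (fst (circuit_action gs (a',b'))) (snd (circuit_action gs (a',b'))) * circuit_mat n gs)"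
    using Cons.IH[OF wgs lt] by auto
  define P where "P = pauli n (fst (circuit_action gs (a',b'))) (snd (circuit_action gs (a',b')))"
  have PC: "P \<in> carrier_mat (2^n) (2^n)" by (simp add: P_def)
  have "circuit_mat n (g # gs) * pauli n a b = circuit_mat n gs * (gate_mat n g * pauli n a b)"
    by (simp add: assoc_square[where N="2^n"])
  also have "\<dots> = circuit_mat n gs * (l1 \<cdot>\<^sub>m (pauli n a' b' * gate_mat n g))" by (simp add: l1)
  also have "\<dots> = l1 \<cdot>\<^sub>m ((circuit_mat n gs * pauli n a' b') * gate_mat n g)"
    by (simp only: mult_smult_square[where N="2^n"] assoc_square[where N="2^n"] square_carriers)
  also have "\<dots> = l1 \<cdot>\<^sub>m ((l2 \<cdot>\<^sub>m (P * circuit_mat n gs)) * gate_mat n g)" by (simp add: l2 P_def)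
  also have "\<dots> = (l1 * l2) \<cdot>\<^sub>m (P * circuit_mat n (g # gs))"
    using PC by (simp only: smult_mult_square[where N="2^n"] assoc_square[where N="2^n"] square_carriers smult_smult_mat circuit_mat.simps)
  finally show ?case using l1 l2 ab' by (intro exI[of _ "l1 * l2"]) (auto simp: P_def norm_mult)
qed

section \<open>Unitarity\<close>

definition adjoint :: "complex mat \<Rightarrow> complex mat" where
  "adjoint M = mat (dim_col M) (dim_row M) (\<lambda>(i,j). cnj (M $$ (j,i)))"

lemma adjoint_carrier[simp]: "M \<in> carrier_mat a b \<Longrightarrow> adjoint M \<in> carrier_mat b a"
  by (auto simp: adjoint_def)

lemma adjoint_index: "i < dim_col M \<Longrightarrow> j < dim_row M \<Longrightarrow> adjoint M $$ (i,j) = cnj (M $$ (j,i))"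
  by (simp add: adjoint_def)

lemma adjoint_dim[simp]: "dim_row (adjoint M) = dim_col M" "dim_col (adjoint M) = dim_row M"
  by (auto simp: adjoint_def)

lemma adjoint_mult:
  assumes "A \<in> carrier_mat N N" "B \<in> carrier_mat N N"
  shows "adjoint (A * B) = adjoint B * adjoint A"
proof (rule eq_square_matI[where N=N])
  fix i j assume ij: "i < N" "j < N"
  have "adjoint (A * B) $$ (i,j) = cnj (\<Sum>k\<in>{0..<N}. A $$ (j,k) * B $$ (k,i))"
    using assms ij by (simp add: adjoint_index scalar_prod_def)
  also have "\<dots> = (\<Sum>k\<in>{0..<N}. adjoint B $$ (i,k) * adjoint A $$ (k,j))"
    using assms ij by (simp add: adjoint_index cnj_sum mult.commute)
  also have "\<dots> = (adjoint B * adjoint A) $$ (i,j)"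
    using assms ij by (simp add: scalar_prod_def)
  finally show "adjoint (A * B) $$ (i,j) = (adjoint B * adjoint A) $$ (i,j)" .
qed (use assms in auto)

lemma adjoint_smult: "adjoint (k \<cdot>\<^sub>m A) = cnj k \<cdot>\<^sub>m adjoint A"
  by (rule eq_matI) (auto simp: adjoint_def)

lemma sum_two_nonzero:
  assumes "finite A" "p1 \<in> A" "p2 \<in> A" "p1 \<noteq> p2" "\<And>k. k \<in> A \<Longrightarrow> k \<noteq> p1 \<Longrightarrow> k \<noteq> p2 \<Longrightarrow> f k = 0"
  shows "sum f A = f p1 + f p2"
proof -
  have "sum f A = sum f {p1,p2}"
    by (rule sum.mono_neutral_right) (use assms in auto)
  then show ?thesis using assms by simp
qed

lemma sqrt2_mult_sqrt2: "complex_of_real (sqrt 2) * complex_of_real (sqrt 2) = 2"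
proof -
  have "complex_of_real (sqrt 2) * complex_of_real (sqrt 2) = complex_of_real (sqrt 2 * sqrt 2)"
    by (simp only: of_real_mult)
  then show ?thesis by simp
qed

lemma hadamard_entry_sym: "hadamard_entry q i j = hadamard_entry q j i"
  by (auto simp: hadamard_entry_def xor_cancel)

lemma H_mat_square:
  assumes "q < n"
  shows "gate_mat n (H q) * gate_mat n (H q) = 1\<^sub>m (2^n)"
proof (rule eq_square_matI[where N="2^n"])
  fix i j :: nat assume ij: "i < 2^n" "j < 2^n"
  define e :: nat where "e = 2^q"
  have ie: "i XOR e < 2^n" using ij assms by (simp add: e_def)
  have "bt (i XOR e) q \<noteq> bt i q" by (simp add: e_def bit_xor_iff bit_exp_iff)
  then have ne: "i \<noteq> i XOR e" by metis
  have "(gate_mat n (H q) * gate_mat n (H q)) $$ (i,j) = (\<Sum>k\<in>{0..<2^n}. hadamard_entry q i k * hadamard_entry q k j)"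
    using ij by (simp add: scalar_prod_def H_mat_index)
  also have "\<dots> = hadamard_entry q i i * hadamard_entry q i j + hadamard_entry q i (i XOR e) * hadamard_entry q (i XOR e) j"
    by (rule sum_two_nonzero) (use ij ie ne in \<open>auto simp: hadamard_entry_def e_def\<close>)
  also have "\<dots> = (if i = j then 1 else 0)"
  proof -
    have b: "bt (i XOR e) q = (\<not> bt i q)" by (simp add: e_def bit_xor_iff bit_exp_iff)
    show ?thesis
    proof (cases "j = i")
      case True
      then show ?thesis using b sqrt2_mult_sqrt2 by (auto simp: hadamard_entry_def e_def xor_cancel field_simps)
    next
      case F: False
      show ?thesis
      proof (cases "j = i XOR e")
        case True
        then show ?thesis using b ne by (auto simp: hadamard_entry_def e_def xor_cancel)
      next
        case False
        then show ?thesis using F by (auto simp: hadamard_entry_def e_def xor_cancel)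
      qed
    qed
  qed
  finally show "(gate_mat n (H q) * gate_mat n (H q)) $$ (i,j) = 1\<^sub>m (2^n) $$ (i,j)" using ij by simp
qed auto

lemma adjoint_H_mat: "adjoint (gate_mat n (H q)) = gate_mat n (H q)"
  by (rule eq_matI) (auto simp: adjoint_def H_mat_index hadamard_entry_sym hadamard_entry_def)

lemma adjoint_CNOT_mat: "c \<noteq> t \<Longrightarrow> adjoint (gate_mat n (CNOT c t)) = gate_mat n (CNOT c t)"
  by (rule eq_matI) (auto simp: adjoint_def CNOT_mat_index)

lemma CNOT_mat_square:
  assumes "c < n" "t < n" "c \<noteq> t"
  shows "gate_mat n (CNOT c t) * gate_mat n (CNOT c t) = 1\<^sub>m (2^n)"
proof (rule eq_square_matI[where N="2^n"])
  fix i j :: nat assume ij: "i < 2^n" "j < 2^n"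
  have "(gate_mat n (CNOT c t) * gate_mat n (CNOT c t)) $$ (i,j) = gate_mat n (CNOT c t) $$ (i, cnot_map c t j) * 1"
    using ij assms by (intro mult_index_single_col) (auto simp: CNOT_mat_index)
  then show "(gate_mat n (CNOT c t) * gate_mat n (CNOT c t)) $$ (i,j) = 1\<^sub>m (2^n) $$ (i,j)"
    using ij assms by (auto simp: CNOT_mat_index)
qed auto

definition phase_entry :: "nat \<Rightarrow> nat \<Rightarrow> complex" where "phase_entry q j = (if bt j q then \<i> else 1)"

lemma adjoint_S_mat_index: "i < 2^n \<Longrightarrow> j < 2^n \<Longrightarrow> adjoint (gate_mat n (S q)) $$ (i,j) = (if i = j then cnj (phase_entry q j) else 0)"
  by (simp add: adjoint_index S_mat_index phase_entry_def)

lemma S_mat_unitary: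
  shows "adjoint (gate_mat n (S q)) * gate_mat n (S q) = 1\<^sub>m (2^n)"
    and "gate_mat n (S q) * adjoint (gate_mat n (S q)) = 1\<^sub>m (2^n)"
proof -
  show "adjoint (gate_mat n (S q)) * gate_mat n (S q) = 1\<^sub>m (2^n)"
  proof (rule eq_square_matI[where N="2^n"])
    fix i j :: nat assume ij: "i < 2^n" "j < 2^n"
    have "(adjoint (gate_mat n (S q)) * gate_mat n (S q)) $$ (i,j) = adjoint (gate_mat n (S q)) $$ (i, j) * phase_entry q j"
      using ij by (intro mult_index_single_col) (auto simp: S_mat_index phase_entry_def)
    then show "(adjoint (gate_mat n (S q)) * gate_mat n (S q)) $$ (i,j) = 1\<^sub>m (2^n) $$ (i,j)"
      using ij by (auto simp: adjoint_S_mat_index phase_entry_def)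
  qed auto
  show "gate_mat n (S q) * adjoint (gate_mat n (S q)) = 1\<^sub>m (2^n)"
  proof (rule eq_square_matI[where N="2^n"])
    fix i j :: nat assume ij: "i < 2^n" "j < 2^n"
    have "(gate_mat n (S q) * adjoint (gate_mat n (S q))) $$ (i,j) = gate_mat n (S q) $$ (i, j) * cnj (phase_entry q j)"
      using ij by (intro mult_index_single_col) (auto simp: adjoint_S_mat_index)
    then show "(gate_mat n (S q) * adjoint (gate_mat n (S q))) $$ (i,j) = 1\<^sub>m (2^n) $$ (i,j)"
      using ij by (auto simp: S_mat_index phase_entry_def)
  qed auto
qed

lemma gate_mat_unitary:
  assumes "wf_gate n g"
  shows "adjoint (gate_mat n g) * gate_mat n g = 1\<^sub>m (2^n) \<and> gate_mat n g * adjoint (gate_mat n g) = 1\<^sub>m (2^n)"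
  using assms by (cases g) (auto simp: wf_gate_def adjoint_H_mat H_mat_square adjoint_CNOT_mat CNOT_mat_square S_mat_unitary)

lemma circuit_mat_unitary:
  assumes "wf_circuit n c"
  shows "adjoint (circuit_mat n c) * circuit_mat n c = 1\<^sub>m (2^n) \<and> circuit_mat n c * adjoint (circuit_mat n c) = 1\<^sub>m (2^n)"
  using assms
proof (induction c)
  case Nil
  have "adjoint (1\<^sub>m (2^n)) = 1\<^sub>m (2^n)" by (rule eq_matI) (auto simp: adjoint_def)
  then show ?case by simp
next
  case (Cons g gs)
  have wg: "wf_gate n g" and wgs: "wf_circuit n gs" using Cons.prems by (auto simp: wf_circuit_def)
  note G = gate_mat_unitary[OF wg] and U = Cons.IH[OF wgs]
  define A where "A = circuit_mat n gs"
  define B where "B = gate_mat n g"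
  have AC: "A \<in> carrier_mat (2^n) (2^n)" "B \<in> carrier_mat (2^n) (2^n)" by (auto simp: A_def B_def)
  have AA: "adjoint A \<in> carrier_mat (2^n) (2^n)" "adjoint B \<in> carrier_mat (2^n) (2^n)" using AC by auto
  have 1: "adjoint (A * B) * (A * B) = 1\<^sub>m (2^n)"
  proof -
    have "adjoint (A * B) * (A * B) = adjoint B * ((adjoint A * A) * B)"
      using AC AA by (simp only: adjoint_mult[where N="2^n"] assoc_square[where N="2^n"] square_carriers)
    also have "\<dots> = 1\<^sub>m (2^n)" using U G AC by (simp add: A_def B_def)
    finally show ?thesis .
  qed
  have 2: "(A * B) * adjoint (A * B) = 1\<^sub>m (2^n)"
  proof -
    have "(A * B) * adjoint (A * B) = A * ((B * adjoint B) * adjoint A)"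
      using AC AA by (simp only: adjoint_mult[where N="2^n"] assoc_square[where N="2^n"] square_carriers)
    also have "\<dots> = 1\<^sub>m (2^n)" using U G AC by (simp add: A_def B_def)
    finally show ?thesis .
  qed
  show ?case using 1 2 by (simp add: A_def B_def)
qed

lemma adjoint_pauli_index: "i < 2^n \<Longrightarrow> k < 2^n \<Longrightarrow> adjoint (pauli n a b) $$ (i,k) = (if k = i XOR a then dot_sign n b i else 0)"
  by (auto simp: adjoint_index pauli_index dot_sign_def eq_xor_iff)

lemma pauli_unitary: "a < 2^n \<Longrightarrow> adjoint (pauli n a b) * pauli n a b = 1\<^sub>m (2^n)"
proof (rule eq_square_matI[where N="2^n"])
  fix i j :: nat assume ij: "i < 2^n" "j < 2^n" and a: "a < 2^n"
  have "(adjoint (pauli n a b) * pauli n a b) $$ (i,j) = dot_sign n b i * pauli n a b $$ (i XOR a, j)"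
    using ij a by (intro mult_index_single_row) (auto simp: adjoint_pauli_index)
  then show "(adjoint (pauli n a b) * pauli n a b) $$ (i,j) = 1\<^sub>m (2^n) $$ (i,j)"
    using ij a by (auto simp: pauli_index eq_xor_iff)
qed auto

lemma relative_conj_commute:
  assumes C: "U \<in> carrier_mat N N" "V \<in> carrier_mat N N" "X \<in> carrier_mat N N" "P \<in> carrier_mat N N"
    and VV: "adjoint V * V = 1\<^sub>m N" "V * adjoint V = 1\<^sub>m N"
    and hU: "U * X = l \<cdot>\<^sub>m (P * U)" and hV: "V * X = l' \<cdot>\<^sub>m (P * V)" and l': "l' \<noteq> 0"
  shows "(adjoint V * U) * X = (l / l') \<cdot>\<^sub>m (X * (adjoint V * U))"
proof -
  have AV: "adjoint V \<in> carrier_mat N N" using C by auto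
  note cr = C AV mult_square_carrier smult_carrier_mat
  have XA: "X * adjoint V = l' \<cdot>\<^sub>m (adjoint V * P)"
  proof -
    have "X * adjoint V = (adjoint V * V) * X * adjoint V" using C VV by simp
    also have "\<dots> = adjoint V * (V * X) * adjoint V" by (simp only: assoc_square[where N=N] cr)
    also have "\<dots> = adjoint V * (l' \<cdot>\<^sub>m (P * V)) * adjoint V" by (simp only: hV)
    also have "\<dots> = l' \<cdot>\<^sub>m (adjoint V * P * (V * adjoint V))"
      by (simp only: mult_smult_square[where N=N] smult_mult_square[where N=N] assoc_square[where N=N] cr)
    also have "\<dots> = l' \<cdot>\<^sub>m (adjoint V * P)" using VV C by simp
    finally show ?thesis .
  qed
  have 1: "(adjoint V * U) * X = l \<cdot>\<^sub>m (adjoint V * P * U)"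
  proof -
    have "(adjoint V * U) * X = adjoint V * (U * X)" by (simp only: assoc_square[where N=N] cr)
    also have "\<dots> = l \<cdot>\<^sub>m (adjoint V * P * U)" by (simp only: hU mult_smult_square[where N=N] assoc_square[where N=N] cr)
    finally show ?thesis .
  qed
  have 2: "X * (adjoint V * U) = l' \<cdot>\<^sub>m (adjoint V * P * U)"
  proof -
    have "X * (adjoint V * U) = (X * adjoint V) * U" by (simp only: assoc_square[where N=N] cr)
    also have "\<dots> = l' \<cdot>\<^sub>m (adjoint V * P * U)" by (simp only: XA smult_mult_square[where N=N] assoc_square[where N=N] cr)
    finally show ?thesis .
  qed
  show ?thesis unfolding 1 2 using l' by (simp add: smult_smult_mat)
qed

lemma unitary_smult_norm:
  assumes "adjoint U * U = 1\<^sub>m N" "adjoint M * M = 1\<^sub>m N" "U = z \<cdot>\<^sub>m M" "M \<in> carrier_mat N N" "0 < N"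
  shows "cmod z = 1"
proof -
  have "adjoint U * U = (cnj z * z) \<cdot>\<^sub>m (adjoint M * M)"
    unfolding assms(3) adjoint_smult
    by (simp only: smult_mult_square[where N=N] mult_smult_square[where N=N] smult_smult_mat adjoint_carrier assms(4) smult_carrier_mat) (simp add: mult.commute)
  then have "adjoint U * U = (cnj z * z) \<cdot>\<^sub>m 1\<^sub>m N" using assms(2) by simp
  then have "(cnj z * z) \<cdot>\<^sub>m 1\<^sub>m N = 1\<^sub>m N" using assms(1) by metis
  then have "((cnj z * z) \<cdot>\<^sub>m 1\<^sub>m N) $$ (0,0) = 1\<^sub>m N $$ (0,0)" by simp
  then have "cnj z * z = 1" using assms by simp
  then have "complex_of_real ((cmod z)^2) = 1" using complex_norm_square[of z] by (metis mult.commute)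
  then have "(cmod z)^2 = 1" by (metis of_real_eq_1_iff)
  then show ?thesis using norm_ge_zero[of z] by (auto simp: power2_eq_1_iff)
qed

section \<open>The symplectic action\<close>

definition vxor :: "nat \<times> nat \<Rightarrow> nat \<times> nat \<Rightarrow> nat \<times> nat" where
  "vxor v w = (fst v XOR fst w, snd v XOR snd w)"

definition vbounded :: "nat \<Rightarrow> nat \<times> nat \<Rightarrow> bool" where
  "vbounded n v = (fst v < 2^n \<and> snd v < 2^n)"

definition symp_mask :: "nat \<times> nat \<Rightarrow> nat \<times> nat \<Rightarrow> nat" where
  "symp_mask v w = (fst v AND snd w) XOR (snd v AND fst w)"

text \<open>\<open>symp n v w\<close> holds iff the Pauli operators of \<open>v\<close> and \<open>w\<close> anticommute.\<close>
definition symp :: "nat \<Rightarrow> nat \<times> nat \<Rightarrow> nat \<times> nat \<Rightarrow> bool" where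
  "symp n v w = parity n (symp_mask v w)"

definition Xvec :: "nat \<Rightarrow> nat \<times> nat" where "Xvec q = (2^q, 0)"

definition Zvec :: "nat \<Rightarrow> nat \<times> nat" where "Zvec q = (0, 2^q)"

lemma bit_gate_action:
  "bt (fst (gate_action (H q) v)) k = (if k = q then bt (snd v) q else bt (fst v) k)"
  "bt (snd (gate_action (H q) v)) k = (if k = q then bt (fst v) q else bt (snd v) k)"
  "fst (gate_action (S q) v) = fst v"
  "bt (snd (gate_action (S q) v)) k = (if k = q then bt (snd v) q \<noteq> bt (fst v) q else bt (snd v) k)"
  "c \<noteq> t \<Longrightarrow> bt (fst (gate_action (CNOT c t) v)) k = (if k = t then bt (fst v) t \<noteq> bt (fst v) c else bt (fst v) k)"
  "c \<noteq> t \<Longrightarrow> bt (snd (gate_action (CNOT c t) v)) k = (if k = c then bt (snd v) c \<noteq> bt (snd v) t else bt (snd v) k)"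
  by (cases v; auto simp: bit_xor_iff bit_exp_iff bit_cnot_map)+

lemma pair_bit_eqI: "(\<And>k. bt (fst v) k = bt (fst w) k) \<Longrightarrow> (\<And>k. bt (snd v) k = bt (snd w) k) \<Longrightarrow> v = w"
  by (metis bit_eqI prod.collapse)

lemma fst_vxor[simp]: "fst (vxor v w) = fst v XOR fst w" and snd_vxor[simp]: "snd (vxor v w) = snd v XOR snd w"
  by (auto simp: vxor_def)

lemma gate_action_vxor: "wf_gate n g \<Longrightarrow> gate_action g (vxor v w) = vxor (gate_action g v) (gate_action g w)"
  by (cases g; rule pair_bit_eqI; auto simp: bit_gate_action bit_xor_iff wf_gate_def)

lemma circuit_action_vxor: "wf_circuit n c \<Longrightarrow> circuit_action c (vxor v w) = vxor (circuit_action c v) (circuit_action c w)"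
proof (induction c arbitrary: v w)
  case Nil then show ?case by simp
next
  case (Cons g c)
  have "wf_gate n g" "wf_circuit n c" using Cons.prems by (auto simp: wf_circuit_def)
  then show ?case using Cons.IH by (simp add: gate_action_vxor)
qed

lemma circuit_action_0: "wf_circuit n c \<Longrightarrow> circuit_action c (0,0) = (0,0)"
proof -
  assume w: "wf_circuit n c"
  have "circuit_action c (0,0) = vxor (circuit_action c (0,0)) (circuit_action c (0,0))" using circuit_action_vxor[OF w, of "(0,0)" "(0,0)"] by (simp add: vxor_def)
  then show ?thesis by (simp add: vxor_def prod_eq_iff)
qed

lemma gate_action_involution: "wf_gate n g \<Longrightarrow> gate_action g (gate_action g v) = v"
  by (cases g; rule pair_bit_eqI; auto simp: bit_gate_action wf_gate_def)

lemma circuit_action_rev: "wf_circuit n c \<Longrightarrow> circuit_action (rev c) (circuit_action c v) = v"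
  by (induction c arbitrary: v) (auto simp: wf_circuit_def circuit_action_append gate_action_involution)

lemma circuit_action_rev': "wf_circuit n c \<Longrightarrow> circuit_action c (circuit_action (rev c) v) = v"
  using circuit_action_rev[of n "rev c"] by (simp add: wf_circuit_def)

lemma wf_circuit_rev[simp]: "wf_circuit n (rev c) = wf_circuit n c"
  by (simp add: wf_circuit_def)

lemma wf_circuit_append[simp]: "wf_circuit n (x @ y) = (wf_circuit n x \<and> wf_circuit n y)"
  by (auto simp: wf_circuit_def)

lemma vbounded_circuit_action: "wf_circuit n c \<Longrightarrow> vbounded n v \<Longrightarrow> vbounded n (circuit_action c v)"
  using circuit_action_less_exp[of n c "fst v" "snd v"] by (auto simp: vbounded_def)

definition same_action :: "nat \<Rightarrow> gate list \<Rightarrow> gate list \<Rightarrow> bool" where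
  "same_action n c d = (\<forall>v. vbounded n v \<longrightarrow> circuit_action c v = circuit_action d v)"

lemma same_action_append:
  assumes "wf_circuit n c1" "same_action n c1 d1" "same_action n c2 d2"
  shows "same_action n (c1 @ c2) (d1 @ d2)"
  unfolding same_action_def
proof (intro allI impI)
  fix v assume v: "vbounded n v"
  have "circuit_action c1 v = circuit_action d1 v" using assms(2) v unfolding same_action_def by blast
  moreover have "vbounded n (circuit_action c1 v)" using vbounded_circuit_action[OF assms(1) v] .
  then have "circuit_action c2 (circuit_action c1 v) = circuit_action d2 (circuit_action c1 v)"
    using assms(3) unfolding same_action_def by blast
  ultimately show "circuit_action (c1 @ c2) v = circuit_action (d1 @ d2) v"
    by (simp add: circuit_action_append)
qed

lemma symp_gate_action: "wf_gate n g \<Longrightarrow> symp n (gate_action g v) (gate_action g w) = symp n v w"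
proof (cases g)
  case (H q)
  have "symp_mask (gate_action g v) (gate_action g w) = symp_mask v w"
    unfolding H by (rule bit_eqI) (auto simp: symp_mask_def bit_and_iff bit_xor_iff bit_gate_action)
  then show ?thesis by (simp add: symp_def)
next
  case (S q)
  have "symp_mask (gate_action g v) (gate_action g w) = symp_mask v w"
    unfolding S by (rule bit_eqI) (auto simp: symp_mask_def bit_and_iff bit_xor_iff bit_gate_action)
  then show ?thesis by (simp add: symp_def)
next
  case (CNOT c t)
  assume w: "wf_gate n g"
  then have ct: "c < n" "t < n" "c \<noteq> t" using CNOT by (auto simp: wf_gate_def)
  have "symp_mask (gate_action g v) (gate_action g w) = symp_mask v w XOR (if (bt (fst v) c \<and> bt (snd w) t) \<noteq> (bt (snd v) t \<and> bt (fst w) c) then 2^c XOR 2^t else 0)"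
    unfolding CNOT by (rule bit_eqI) (use ct in \<open>auto simp: symp_mask_def bit_and_iff bit_xor_iff bit_gate_action bit_exp_iff\<close>)
  then show ?thesis using ct by (simp add: symp_def parity_xor parity_exp)
qed

lemma symp_circuit_action: "wf_circuit n c \<Longrightarrow> symp n (circuit_action c v) (circuit_action c w) = symp n v w"
  by (induction c arbitrary: v w) (auto simp: wf_circuit_def symp_gate_action)

lemma symp_Xvec: "q < n \<Longrightarrow> symp n v (Xvec q) = bt (snd v) q"
  by (simp add: symp_def symp_mask_def Xvec_def parity_and_exp)

lemma symp_Zvec: "q < n \<Longrightarrow> symp n v (Zvec q) = bt (fst v) q"
  by (simp add: symp_def symp_mask_def Zvec_def parity_xor parity_and_exp)

lemma symp_Xvec_Zvec: "q < n \<Longrightarrow> symp n (Xvec q) (Zvec q)"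
  by (simp add: symp_def symp_mask_def Xvec_def Zvec_def parity_and_exp bit_exp_iff parity_exp)

lemma vxor_hom_fixing_basis:
  assumes lin: "\<And>v w. f (vxor v w) = vxor (f v) (f w)"
    and fx: "\<And>q. q < n \<Longrightarrow> f (Xvec q) = Xvec q" and fz: "\<And>q. q < n \<Longrightarrow> f (Zvec q) = Zvec q"
    and v: "vbounded n v"
  shows "f v = v"
proof -
  have f0: "f (0,0) = (0,0)"
  proof -
    have "f (0,0) = vxor (f (0,0)) (f (0,0))" using lin[of "(0,0)" "(0,0)"] by (simp add: vxor_def)
    then show ?thesis by (simp add: vxor_def prod_eq_iff)
  qed
  have "k \<le> n \<Longrightarrow> f (of_bits k (bt (fst v)), of_bits k (bt (snd v))) = (of_bits k (bt (fst v)), of_bits k (bt (snd v)))" for k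
  proof (induction k)
    case 0 then show ?case using f0 by simp
  next
    case (Suc k)
    define ea where "ea = (if bt (fst v) k then 2^k else (0::nat))"
    define eb where "eb = (if bt (snd v) k then 2^k else (0::nat))"
    have kn: "k < n" using Suc by simp
    have fa: "f (ea, 0) = (ea, 0)" using fx[OF kn] f0 by (simp add: ea_def Xvec_def)
    have fb: "f (0, eb) = (0, eb)" using fz[OF kn] f0 by (simp add: eb_def Zvec_def)
    have eq: "(of_bits (Suc k) (bt (fst v)), of_bits (Suc k) (bt (snd v))) = vxor (of_bits k (bt (fst v)), of_bits k (bt (snd v))) (vxor (ea,0) (0,eb))"
      by (simp add: vxor_def ea_def eb_def)
    show ?case unfolding eq lin using Suc fa fb kn by simp
  qed
  from this[of n] show ?thesis using v by (simp add: vbounded_def of_bits_bit)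
qed

section \<open>Circuits with the same action differ by a Pauli operator\<close>

lemma commute_Z_entry:
  assumes W: "W \<in> carrier_mat (2^n) (2^n)" and q: "q < n" and ij: "i < 2^n" "j < 2^n"
    and comm: "W * pauli n 0 (2^q) = m \<cdot>\<^sub>m (pauli n 0 (2^q) * W)"
  shows "W$$(i,j) * dot_sign n (2^q) j = m * (dot_sign n (2^q) i * W$$(i,j))"
proof -
  have "(W * pauli n 0 (2^q))$$(i,j) = (m \<cdot>\<^sub>m (pauli n 0 (2^q) * W))$$(i,j)" using comm by simp
  then show ?thesis using q ij W by (simp add: mult_pauli_index pauli_mult_index del: index_mult_mat(1))
qed

lemma commute_X_entry:
  assumes W: "W \<in> carrier_mat (2^n) (2^n)" and q: "q < n" and ij: "i < 2^n" "j < 2^n"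
    and comm: "W * pauli n (2^q) 0 = m \<cdot>\<^sub>m (pauli n (2^q) 0 * W)"
  shows "W$$(i, j XOR 2^q) = m * W$$(i XOR 2^q, j)"
proof -
  have "(W * pauli n (2^q) 0)$$(i,j) = (m \<cdot>\<^sub>m (pauli n (2^q) 0 * W))$$(i,j)" using comm by simp
  then show ?thesis using q ij W by (simp add: mult_pauli_index pauli_mult_index del: index_mult_mat(1))
qed

lemma commute_Z_support:
  assumes W: "W \<in> carrier_mat (2^n) (2^n)"
    and hZ: "\<And>q. q < n \<Longrightarrow> \<exists>m. W * pauli n 0 (2^q) = m \<cdot>\<^sub>m (pauli n 0 (2^q) * W)"
    and ij0: "i0 < 2^n" "j0 < 2^n" "W$$(i0,j0) \<noteq> 0" and ij: "i < 2^n" "j < 2^n" "W$$(i,j) \<noteq> 0"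
  shows "i = j XOR (i0 XOR j0)"
proof (rule bit_eq_less_expI)
  show "i < 2^n" "j XOR (i0 XOR j0) < 2^n" using ij ij0 by auto
  fix q assume q: "q < n"
  obtain m where m: "W * pauli n 0 (2^q) = m \<cdot>\<^sub>m (pauli n 0 (2^q) * W)" using hZ[OF q] by blast
  have "dot_sign n (2^q) j = m * dot_sign n (2^q) i"
    using commute_Z_entry[OF W q ij(1,2) m] ij(3) by simp
  moreover have "dot_sign n (2^q) j0 = m * dot_sign n (2^q) i0"
    using commute_Z_entry[OF W q ij0(1,2) m] ij0(3) by simp
  ultimately show "bt i q = bt (j XOR (i0 XOR j0)) q"
    using q by (auto simp: dot_sign_exp_left bit_xor_iff split: if_splits)
qed

lemma xor_step_character:
  fixes D :: "nat \<Rightarrow> complex"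
  assumes step: "\<And>j q. j < 2^n \<Longrightarrow> q < n \<Longrightarrow> D (j XOR 2^q) = \<mu> q * D j"
    and nz: "j0 < 2^n" "D j0 \<noteq> 0"
  shows "\<exists>b0 < 2^n. \<forall>j < 2^n. D j = D 0 * dot_sign n b0 j"
proof -
  have sign: "\<mu> q = 1 \<or> \<mu> q = -1" if q: "q < n" for q
  proof -
    have "D j0 = D ((j0 XOR 2^q) XOR 2^q)" by simp
    also have "\<dots> = \<mu> q * (\<mu> q * D j0)" using step[of "j0 XOR 2^q" q] step[of j0 q] nz q by simp
    finally have "(\<mu> q * \<mu> q - 1) * D j0 = 0" by (simp add: algebra_simps)
    then have "\<mu> q * \<mu> q = 1" using nz by simp
    then show ?thesis by (metis power2_eq_square power2_eq_1_iff)
  qed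
  define b0 where "b0 = of_bits n (\<lambda>q. \<mu> q = -1)"
  have D: "D (of_bits k (bt j)) = D 0 * dot_sign n b0 (of_bits k (bt j))" if "k \<le> n" for j k
    using that
  proof (induction k)
    case (Suc k)
    have x: "of_bits k (bt j) < 2^n"
      by (rule less_exp_mono[OF of_bits_less_exp]) (use Suc.prems in simp)
    show ?case
      using Suc step[OF x, of k] sign[of k] by (auto simp: dot_sign_xor_right dot_sign_exp_right b0_def bit_of_bits)
  qed simp
  have "D j = D 0 * dot_sign n b0 j" if "j < 2^n" for j
    using D[of n j] of_bits_bit[OF that] by simp
  moreover have "b0 < 2^n" by (simp add: b0_def of_bits_less_exp)
  ultimately show ?thesis by blast
qed

lemma pauli_commutant:
  assumes W: "W \<in> carrier_mat (2^n) (2^n)"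
    and hZ: "\<And>q. q < n \<Longrightarrow> \<exists>m. W * pauli n 0 (2^q) = m \<cdot>\<^sub>m (pauli n 0 (2^q) * W)"
    and hX: "\<And>q. q < n \<Longrightarrow> \<exists>m. W * pauli n (2^q) 0 = m \<cdot>\<^sub>m (pauli n (2^q) 0 * W)"
  shows "\<exists>d a0 b0. a0 < 2^n \<and> b0 < 2^n \<and> W = d \<cdot>\<^sub>m pauli n a0 b0"
proof (cases "\<forall>i<2^n. \<forall>j<2^n. W$$(i,j) = 0")
  case True
  have "W = 0 \<cdot>\<^sub>m pauli n 0 0"
    by (rule eq_square_matI[where N="2^n"]) (use W True in auto)
  then show ?thesis by (intro exI[of _ 0] exI[of _ "0::nat"]) auto
next
  case False
  then obtain i0 j0 where ij0: "i0 < 2^n" "j0 < 2^n" "W$$(i0,j0) \<noteq> 0" by blast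
  define a0 where "a0 = i0 XOR j0"
  have a0: "a0 < 2^n" using ij0 by (simp add: a0_def)
  obtain \<mu> where mu: "\<And>q. q < n \<Longrightarrow> W * pauli n (2^q) 0 = \<mu> q \<cdot>\<^sub>m (pauli n (2^q) 0 * W)"
    using hX by metis
  define D where "D j = W$$(j XOR a0, j)" for j
  have "D (j XOR 2^q) = \<mu> q * D j" if j: "j < 2^n" and q: "q < n" for j q
  proof -
    have "j XOR 2^q XOR a0 < 2^n" using j q a0 by simp
    from commute_X_entry[OF W q this j mu[OF q]] show ?thesis
      by (simp add: D_def xor.assoc xor.left_commute[of a0])
  qed
  moreover have "D j0 \<noteq> 0" using ij0 by (simp add: D_def a0_def xor.assoc)
  ultimately obtain b0 where b0: "b0 < 2^n" "\<forall>j < 2^n. D j = D 0 * dot_sign n b0 j"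
    using xor_step_character[of n D \<mu> j0] ij0(2) by blast
  have "W = D 0 \<cdot>\<^sub>m pauli n a0 b0"
  proof (rule eq_square_matI[where N="2^n"])
    fix i j :: nat assume ij: "i < 2^n" "j < 2^n"
    show "W $$ (i,j) = (D 0 \<cdot>\<^sub>m pauli n a0 b0) $$ (i,j)"
    proof (cases "i = j XOR a0")
      case True
      then show ?thesis using ij b0 by (simp add: pauli_index D_def)
    next
      case False
      then have "W$$(i,j) = 0" using commute_Z_support[OF W hZ ij0 ij] by (auto simp: a0_def)
      then show ?thesis using ij False by (simp add: pauli_index)
    qed
  qed (use W in auto)
  then show ?thesis using a0 b0 by blast
qed

lemma same_action_relative_commute:
  assumes wc: "wf_circuit n c" and wd: "wf_circuit n d" and ab: "a < 2^n" "b < 2^n"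
    and same: "circuit_action c (a,b) = circuit_action d (a,b)"
  shows "\<exists>m. (adjoint (circuit_mat n d) * circuit_mat n c) * pauli n a b
    = m \<cdot>\<^sub>m (pauli n a b * (adjoint (circuit_mat n d) * circuit_mat n c))"
proof -
  obtain l where l: "cmod l = 1" "circuit_mat n c * pauli n a b
      = l \<cdot>\<^sub>m (pauli n (fst (circuit_action c (a,b))) (snd (circuit_action c (a,b))) * circuit_mat n c)"
    using circuit_conj_pauli[OF wc ab] by blast
  obtain l' where l': "cmod l' = 1" "circuit_mat n d * pauli n a b
      = l' \<cdot>\<^sub>m (pauli n (fst (circuit_action c (a,b))) (snd (circuit_action c (a,b))) * circuit_mat n d)"
    using circuit_conj_pauli[OF wd ab] same by auto
  have "l' \<noteq> 0" using l'(1) by auto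
  then show ?thesis
    using relative_conj_commute[where N="2^n", OF circuit_mat_carrier circuit_mat_carrier pauli_carrier pauli_carrier
        _ _ l(2) l'(2)] circuit_mat_unitary[OF wd] by blast
qed

text \<open>For the matrices \<open>U\<close>, \<open>V\<close> of the two circuits, \<open>V\<^sup>\<dagger> U\<close> commutes up to scalars with every
  \<open>X\<^sub>q\<close> and \<open>Z\<^sub>q\<close>, so it is a scalar multiple of a Pauli operator, and the scalar has modulus 1.\<close>
lemma same_action_pauli_factor:
  assumes wc: "wf_circuit n c" and wd: "wf_circuit n d"
    and tX: "\<And>q. q < n \<Longrightarrow> circuit_action c (2^q, 0) = circuit_action d (2^q, 0)"
    and tZ: "\<And>q. q < n \<Longrightarrow> circuit_action c (0, 2^q) = circuit_action d (0, 2^q)"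
  shows "\<exists>z a0 b0. cmod z = 1 \<and> a0 < 2^n \<and> b0 < 2^n \<and> circuit_mat n c = z \<cdot>\<^sub>m (circuit_mat n d * pauli n a0 b0)"
proof -
  define U where "U = circuit_mat n c"
  define V where "V = circuit_mat n d"
  define W where "W = adjoint V * U"
  have C: "U \<in> carrier_mat (2^n) (2^n)" "V \<in> carrier_mat (2^n) (2^n)" "W \<in> carrier_mat (2^n) (2^n)"
    by (auto simp: U_def V_def W_def)
  note UU = circuit_mat_unitary[OF wc, folded U_def] and VV = circuit_mat_unitary[OF wd, folded V_def]
  have "\<exists>m. W * pauli n 0 (2^q) = m \<cdot>\<^sub>m (pauli n 0 (2^q) * W)"
    and "\<exists>m. W * pauli n (2^q) 0 = m \<cdot>\<^sub>m (pauli n (2^q) 0 * W)" if "q < n" for q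
    using same_action_relative_commute[OF wc wd] tX tZ that by (simp_all add: W_def U_def V_def)
  then obtain dd a0 b0 where dab: "a0 < 2^n" "b0 < 2^n" "W = dd \<cdot>\<^sub>m pauli n a0 b0"
    using pauli_commutant[OF C(3)] by metis
  have "U = (V * adjoint V) * U" using VV C by simp
  also have "\<dots> = V * W" unfolding W_def by (rule assoc_square) (use C in auto)
  finally have UVW: "U = dd \<cdot>\<^sub>m (V * pauli n a0 b0)" using dab C by (simp add: mult_smult_square[where N="2^n"])
  have "adjoint (V * pauli n a0 b0) * (V * pauli n a0 b0) = adjoint (pauli n a0 b0) * ((adjoint V * V) * pauli n a0 b0)"
    using C by (simp only: adjoint_mult[where N="2^n"] assoc_square[where N="2^n"] pauli_carrier mult_square_carrier adjoint_carrier)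
  also have "\<dots> = 1\<^sub>m (2^n)" using VV pauli_unitary[OF dab(1)] by simp
  finally have "cmod dd = 1"
    by (intro unitary_smult_norm[OF _ _ UVW]) (use UU C in auto)
  then show ?thesis using dab UVW by (auto simp: U_def V_def)
qed

definition Z_gates :: "nat \<Rightarrow> gate list" where "Z_gates q = [S q, S q]"

definition X_gates :: "nat \<Rightarrow> gate list" where "X_gates q = [H q, S q, S q, H q]"

definition pauli_gates_qubit :: "nat \<Rightarrow> nat \<Rightarrow> nat \<Rightarrow> gate list" where
  "pauli_gates_qubit a b q = (if bt b q then Z_gates q else []) @ (if bt a q then X_gates q else [])"

definition pauli_gates :: "nat \<Rightarrow> nat \<Rightarrow> nat \<Rightarrow> gate list" where
  "pauli_gates a b k = concat (map (pauli_gates_qubit a b) [0..<k])"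

lemma Z_gates_mat: "q < n \<Longrightarrow> circuit_mat n (Z_gates q) = pauli n 0 (2^q)"
proof -
  assume q: "q < n"
  have "circuit_mat n (Z_gates q) = gate_mat n (S q) * gate_mat n (S q)" by (simp add: Z_gates_def)
  also have "\<dots> = pauli n 0 (2^q)"
  proof (rule eq_square_matI[where N="2^n"])
    fix i j :: nat assume ij: "i < 2^n" "j < 2^n"
    have "(gate_mat n (S q) * gate_mat n (S q)) $$ (i,j) = gate_mat n (S q) $$ (i, j) * phase_entry q j"
      using ij by (intro mult_index_single_col) (auto simp: S_mat_index phase_entry_def)
    then show "(gate_mat n (S q) * gate_mat n (S q)) $$ (i,j) = pauli n 0 (2^q) $$ (i,j)"
      using ij q by (auto simp: S_mat_index phase_entry_def pauli_index dot_sign_exp_left)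
  qed auto
  finally show ?thesis .
qed

lemma X_gates_mat: "q < n \<Longrightarrow> circuit_mat n (X_gates q) = pauli n (2^q) 0"
proof -
  assume q: "q < n"
  note cr = gate_mat_carrier pauli_carrier mult_square_carrier smult_carrier_mat
  have "circuit_mat n (X_gates q) = gate_mat n (H q) * (gate_mat n (S q) * gate_mat n (S q)) * gate_mat n (H q)"
    by (simp add: X_gates_def assoc_square[where N="2^n"])
  also have "\<dots> = gate_mat n (H q) * pauli n 0 (2^q) * gate_mat n (H q)"
    using Z_gates_mat[OF q] by (simp add: Z_gates_def)
  also have "\<dots> = (1 \<cdot>\<^sub>m (pauli n (2^q) 0 * gate_mat n (H q))) * gate_mat n (H q)"
    using H_conj_pauli[OF q, of 0 "2^q"] q by (simp add: bit_exp_iff)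
  also have "\<dots> = pauli n (2^q) 0 * (gate_mat n (H q) * gate_mat n (H q))"
    by (simp only: smult_mult_square[where N="2^n"] assoc_square[where N="2^n"] cr smult_one_mat)
  also have "\<dots> = pauli n (2^q) 0" using H_mat_square[OF q] by simp
  finally show ?thesis .
qed

lemma pauli_gates_qubit_mat: "q < n \<Longrightarrow> circuit_mat n (pauli_gates_qubit a b q) = pauli n (if bt a q then 2^q else 0) (if bt b q then 2^q else 0)"
proof -
  assume q: "q < n"
  have "circuit_mat n (pauli_gates_qubit a b q) = pauli n (if bt a q then 2^q else 0) 0 * pauli n 0 (if bt b q then 2^q else 0)"
    using q by (simp add: pauli_gates_qubit_def circuit_mat_append Z_gates_mat X_gates_mat pauli_0_0)
  also have "\<dots> = pauli n (if bt a q then 2^q else 0) (if bt b q then 2^q else 0)"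
    using q by (subst pauli_mult) auto
  finally show ?thesis .
qed

lemma pauli_gates_mat: "k \<le> n \<Longrightarrow> \<exists>\<kappa>. cmod \<kappa> = 1 \<and> circuit_mat n (pauli_gates a b k) = \<kappa> \<cdot>\<^sub>m pauli n (of_bits k (bt a)) (of_bits k (bt b))"
proof (induction k)
  case 0 then show ?case by (intro exI[of _ 1]) (auto simp: pauli_gates_def pauli_0_0)
next
  case (Suc k)
  then obtain \<kappa> where k: "cmod \<kappa> = 1" "circuit_mat n (pauli_gates a b k) = \<kappa> \<cdot>\<^sub>m pauli n (of_bits k (bt a)) (of_bits k (bt b))" by auto
  have kn: "k < n" using Suc by simp
  have ob_lt': "of_bits k (bt a) < 2^n" using of_bits_less_exp[of k] kn
    by (meson less_trans power_strict_increasing_iff one_less_numeral_iff semiring_norm(76))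
  define ea where "ea = (if bt a k then 2^k else (0::nat))"
  define eb where "eb = (if bt b k then 2^k else (0::nat))"
  have ealt: "ea < 2^n" using kn by (simp add: ea_def)
  have "circuit_mat n (pauli_gates a b (Suc k)) = circuit_mat n (pauli_gates_qubit a b k) * circuit_mat n (pauli_gates a b k)"
    by (simp add: pauli_gates_def circuit_mat_append)
  also have "\<dots> = pauli n ea eb * (\<kappa> \<cdot>\<^sub>m pauli n (of_bits k (bt a)) (of_bits k (bt b)))"
    using pauli_gates_qubit_mat[OF kn] k by (simp add: ea_def eb_def)
  also have "\<dots> = (\<kappa> * dot_sign n eb (of_bits k (bt a))) \<cdot>\<^sub>m pauli n (ea XOR of_bits k (bt a)) (eb XOR of_bits k (bt b))"
    using ealt ob_lt' by (simp add: mult_smult_square[where N="2^n"] pauli_mult smult_smult_mat)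
  also have "\<dots> = (\<kappa> * dot_sign n eb (of_bits k (bt a))) \<cdot>\<^sub>m pauli n (of_bits (Suc k) (bt a)) (of_bits (Suc k) (bt b))"
    by (simp add: ea_def eb_def xor.commute)
  finally show ?case using k by (intro exI[of _ "\<kappa> * dot_sign n eb (of_bits k (bt a))"]) (auto simp: norm_mult dot_sign_def)
qed

lemma wf_pauli_gates: "k \<le> n \<Longrightarrow> wf_circuit n (pauli_gates a b k)"
  by (auto simp: pauli_gates_def wf_circuit_def pauli_gates_qubit_def Z_gates_def X_gates_def wf_gate_def)

lemma length_pauli_gates: "length (pauli_gates a b k) \<le> 6 * k"
proof (induction k)
  case 0 then show ?case by (simp add: pauli_gates_def)
next
  case (Suc k)
  have "length (pauli_gates_qubit a b k) \<le> 6" by (simp add: pauli_gates_qubit_def Z_gates_def X_gates_def)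
  then show ?case using Suc by (simp add: pauli_gates_def)
qed

lemma equiv_of_same_action:
  assumes wc: "wf_circuit n c" and wd: "wf_circuit n d" and same: "same_action n c d"
  shows "\<exists>p. wf_circuit n p \<and> length p \<le> 6 * n \<and> equiv_circuits n c (p @ d)"
proof -
  have tX: "circuit_action c (2^q, 0) = circuit_action d (2^q, 0)"
    and tZ: "circuit_action c (0, 2^q) = circuit_action d (0, 2^q)" if "q < n" for q
    using same that unfolding same_action_def by (simp_all add: vbounded_def)
  obtain z a0 b0 where z: "cmod z = 1" "a0 < 2^n" "b0 < 2^n" "circuit_mat n c = z \<cdot>\<^sub>m (circuit_mat n d * pauli n a0 b0)"
    using same_action_pauli_factor[OF wc wd tX tZ] by blast
  obtain \<kappa> where k: "cmod \<kappa> = 1" "circuit_mat n (pauli_gates a0 b0 n) = \<kappa> \<cdot>\<^sub>m pauli n a0 b0"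
    using pauli_gates_mat[of n n a0 b0] z(2,3) by (auto simp: of_bits_bit)
  have "circuit_mat n (pauli_gates a0 b0 n @ d) = \<kappa> \<cdot>\<^sub>m (circuit_mat n d * pauli n a0 b0)"
    using k by (simp add: circuit_mat_append mult_smult_square[where N="2^n"])
  then have "circuit_mat n c = (z / \<kappa>) \<cdot>\<^sub>m circuit_mat n (pauli_gates a0 b0 n @ d)"
    using z k by (auto simp: smult_smult_mat)
  moreover have "cmod (z / \<kappa>) = 1" using z k by (simp add: norm_divide)
  ultimately have "equiv_circuits n c (pauli_gates a0 b0 n @ d)" by (auto simp: equiv_circuits_def)
  moreover have "wf_circuit n (pauli_gates a0 b0 n @ d)" using wf_pauli_gates[of n n] wd by (auto simp: wf_circuit_def)
  ultimately show ?thesis using length_pauli_gates[of a0 b0 n] by (intro exI[of _ "pauli_gates a0 b0 n"]) (auto simp: wf_circuit_def wf_pauli_gates[of n n, simplified wf_circuit_def])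
qed

section \<open>Normal form: CNOT-phase, Hadamard layer, CNOT-phase\<close>

lemma cnot_fanout_action: "bt x i \<Longrightarrow> i \<notin> set ts \<Longrightarrow> circuit_action (map (CNOT i) ts) (x, 0) = (x XOR mask ts, 0)"
proof (induction ts arbitrary: x)
  case Nil then show ?case by simp
next
  case (Cons t ts)
  have "gate_action (CNOT i t) (x, 0) = (x XOR 2^t, 0)" using Cons.prems by (simp add: cnot_map_def)
  moreover have "bt (x XOR 2^t) i" using Cons.prems by (auto simp: bit_xor_iff bit_exp_iff)
  ultimately show ?case using Cons by (simp add: xor.assoc)
qed

lemma cnot_fanout_Zvec: "i \<notin> set ts \<Longrightarrow> circuit_action (map (CNOT i) ts) (0, 2^i) = (0, 2^i)"
  by (induction ts) (auto simp: cnot_map_def bit_exp_iff)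

lemma cnot_fanin_action: "bt y i \<Longrightarrow> i \<notin> set cs \<Longrightarrow> circuit_action (map (\<lambda>c. CNOT c i) cs) (0, y) = (0, y XOR mask cs)"
proof (induction cs arbitrary: y)
  case Nil then show ?case by simp
next
  case (Cons c cs)
  have "gate_action (CNOT c i) (0, y) = (0, y XOR 2^c)" using Cons.prems by (simp add: cnot_map_def)
  moreover have "bt (y XOR 2^c) i" using Cons.prems by (auto simp: bit_xor_iff bit_exp_iff)
  ultimately show ?case using Cons by (simp add: xor.assoc)
qed

definition support_from :: "nat \<Rightarrow> nat \<Rightarrow> nat \<Rightarrow> nat \<Rightarrow> nat list" where
  "support_from n m i a = filter (\<lambda>t. bt a t \<and> t \<noteq> i) [m..<n]"

lemma set_support_from: "t \<in> set (support_from n m i a) \<longleftrightarrow> bt a t \<and> t \<noteq> i \<and> m \<le> t \<and> t < n"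
  by (auto simp: support_from_def)

lemma distinct_support_from: "distinct (support_from n m i a)"
  by (simp add: support_from_def)

lemma mask_support_from: "a < 2^n \<Longrightarrow> (\<forall>q<m. \<not> bt a q) \<Longrightarrow> mask (support_from n m i a) = a XOR (if bt a i then 2^i else 0)"
  by (rule bit_eqI) (auto simp: bit_mask[OF distinct_support_from] set_support_from bit_xor_iff bit_exp_iff dest: less_exp_bitD)

definition prepare_X :: "nat \<Rightarrow> nat \<Rightarrow> nat \<Rightarrow> nat \<Rightarrow> gate list" where
  "prepare_X n m i a = (if i = m then [] else [CNOT m i, CNOT i m]) @ map (CNOT i) (support_from n m i a)"

definition prepare_Z :: "nat \<Rightarrow> nat \<Rightarrow> nat \<Rightarrow> nat \<Rightarrow> gate list" where
  "prepare_Z n m i b = (if i = m then [] else [CNOT i m, CNOT m i]) @ map (\<lambda>c. CNOT c i) (support_from n m i b)"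

lemma prepare_X_action:
  assumes "bt a i" "m \<le> i" "i < n" "a < 2^n" "\<forall>q<m. \<not> bt a q"
  shows "circuit_action (prepare_X n m i a) (Xvec m) = (a, 0)"
proof -
  have pre: "circuit_action (if i = m then [] else [CNOT m i, CNOT i m]) (2^m, 0) = (2^i, 0)"
  proof (cases "i = m")
    case False
    have "bt (2^m XOR 2^i) i" using False by (simp add: bit_xor_iff bit_exp_iff)
    then show ?thesis using False by (simp add: cnot_map_def bit_exp_iff xor.assoc)
  qed simp
  have "circuit_action (map (CNOT i) (support_from n m i a)) (2^i, 0) = (2^i XOR mask (support_from n m i a), 0)"
    by (rule cnot_fanout_action) (auto simp: bit_exp_iff set_support_from)
  then show ?thesis using pre assms by (simp add: prepare_X_def circuit_action_append Xvec_def mask_support_from)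
qed

lemma prepare_X_Zvec: "circuit_action (prepare_X n m m a) (Zvec m) = Zvec m"
  by (simp add: prepare_X_def Zvec_def cnot_fanout_Zvec set_support_from)

lemma prepare_Z_action:
  assumes "bt b i" "m \<le> i" "i < n" "b < 2^n" "\<forall>q<m. \<not> bt b q"
  shows "circuit_action (prepare_Z n m i b) (Zvec m) = (0, b)"
proof -
  have pre: "circuit_action (if i = m then [] else [CNOT i m, CNOT m i]) (0, 2^m) = (0, 2^i)"
  proof (cases "i = m")
    case False
    have "bt (2^m XOR 2^i) i" using False by (simp add: bit_xor_iff bit_exp_iff)
    then show ?thesis using False by (simp add: cnot_map_def bit_exp_iff xor.assoc)
  qed simp
  have "circuit_action (map (\<lambda>c. CNOT c i) (support_from n m i b)) (0, 2^i) = (0, 2^i XOR mask (support_from n m i b))"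
    by (rule cnot_fanin_action) (auto simp: bit_exp_iff set_support_from)
  then show ?thesis using pre assms by (simp add: prepare_Z_def circuit_action_append Zvec_def mask_support_from)
qed

definition CZ_gates :: "nat \<Rightarrow> nat \<Rightarrow> gate list" where
  "CZ_gates i j = [CNOT i j, S j, CNOT i j, S i, S j]"

lemma CZ_gates_action: "i \<noteq> j \<Longrightarrow> circuit_action (CZ_gates i j) v = (fst v, snd v XOR (if bt (fst v) j then 2^i else 0) XOR (if bt (fst v) i then 2^j else 0))"
  by (rule pair_bit_eqI) (auto simp: CZ_gates_def bit_gate_action bit_xor_iff bit_exp_iff)

fun CZ_fan :: "nat \<Rightarrow> nat list \<Rightarrow> gate list" where
  "CZ_fan i [] = []"
| "CZ_fan i (j # js) = CZ_gates i j @ CZ_fan i js"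

lemma CZ_fan_action:
  assumes "i \<notin> set js" "\<forall>j\<in>set js. j < n"
  shows "circuit_action (CZ_fan i js) v = (fst v, snd v XOR (if bt (fst v) i then mask js else 0) XOR (if parity n (fst v AND mask js) then 2^i else 0))"
  using assms
proof (induction js arbitrary: v)
  case Nil then show ?case by simp
next
  case (Cons j js)
  have ij: "i \<noteq> j" "j < n" using Cons.prems by auto
  have p: "parity n (fst v AND (2^j XOR mask js)) = (bt (fst v) j \<noteq> parity n (fst v AND mask js))"
    using ij by (simp add: and_xor_distrib parity_xor parity_and_exp)
  have IH: "circuit_action (CZ_fan i js) w = (fst w, snd w XOR (if bt (fst w) i then mask js else 0) XOR (if parity n (fst w AND mask js) then 2^i else 0))" for w
    using Cons by simp
  show ?case using ij
    by (simp only: CZ_fan.simps circuit_action_append CZ_gates_action[OF ij(1)] IH) (rule pair_bit_eqI, auto simp: bit_xor_iff p)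
qed

definition prepare_phase :: "nat \<Rightarrow> nat \<Rightarrow> nat \<Rightarrow> nat \<Rightarrow> nat \<Rightarrow> gate list" where
  "prepare_phase n m i a b = CZ_fan i (support_from n m i b) @ (if parity n (a AND mask (support_from n m i b)) \<noteq> bt b i then [S i] else [])"

lemma prepare_phase_action:
  assumes "bt a i" "m \<le> i" "i < n" "b < 2^n" "\<forall>q<m. \<not> bt b q"
  shows "circuit_action (prepare_phase n m i a b) (a, 0) = (a, b)"
proof -
  have c: "circuit_action (CZ_fan i (support_from n m i b)) (a, 0) = (a, mask (support_from n m i b) XOR (if parity n (a AND mask (support_from n m i b)) then 2^i else 0))"
    using assms by (simp add: CZ_fan_action[where n=n] set_support_from)
  show ?thesis using assms
    by (simp add: prepare_phase_def circuit_action_append c mask_support_from)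
qed

lemma prepare_phase_Z_action: "circuit_action (prepare_phase n m i a b) (0, y) = (0, y)"
proof -
  have "circuit_action (CZ_fan i (support_from n m i b)) (0, y) = (0, y)"
    by (simp add: CZ_fan_action[where n=n] set_support_from)
  then show ?thesis by (simp add: prepare_phase_def circuit_action_append)
qed

definition cs_gate :: "nat \<Rightarrow> nat \<Rightarrow> gate \<Rightarrow> bool" where
  "cs_gate n m g = (case g of H q \<Rightarrow> False | S q \<Rightarrow> m \<le> q \<and> q < n
     | CNOT c t \<Rightarrow> m \<le> c \<and> c < n \<and> m \<le> t \<and> t < n \<and> c \<noteq> t)"

definition cs_circuit :: "nat \<Rightarrow> nat \<Rightarrow> gate list \<Rightarrow> bool" where
  "cs_circuit n m p = (\<forall>g\<in>set p. cs_gate n m g)"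

lemma cs_circuit_append[simp]: "cs_circuit n m (x @ y) = (cs_circuit n m x \<and> cs_circuit n m y)"
  by (auto simp: cs_circuit_def)

lemma cs_circuit_rev[simp]: "cs_circuit n m (rev x) = cs_circuit n m x"
  by (auto simp: cs_circuit_def)

lemma cs_circuit_wf: "cs_circuit n m p \<Longrightarrow> wf_circuit n p"
  by (auto simp: cs_circuit_def wf_circuit_def cs_gate_def wf_gate_def split: gate.splits)

lemma cs_circuit_mono: "m' \<le> m \<Longrightarrow> cs_circuit n m p \<Longrightarrow> cs_circuit n m' p"
  by (auto simp: cs_circuit_def cs_gate_def split: gate.splits)

lemma cs_circuit_prepare_X: "m \<le> i \<Longrightarrow> i < n \<Longrightarrow> cs_circuit n m (prepare_X n m i a)"
  by (auto simp: cs_circuit_def cs_gate_def prepare_X_def set_support_from)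

lemma cs_circuit_prepare_Z: "m \<le> i \<Longrightarrow> i < n \<Longrightarrow> cs_circuit n m (prepare_Z n m i a)"
  by (auto simp: cs_circuit_def cs_gate_def prepare_Z_def set_support_from)

lemma cs_circuit_CZ_fan: "m \<le> i \<Longrightarrow> i < n \<Longrightarrow> \<forall>j\<in>set js. m \<le> j \<and> j < n \<and> j \<noteq> i \<Longrightarrow> cs_circuit n m (CZ_fan i js)"
  by (induction js) (auto simp: cs_circuit_def cs_gate_def CZ_gates_def)

lemma cs_circuit_prepare_phase: "m \<le> i \<Longrightarrow> i < n \<Longrightarrow> cs_circuit n m (prepare_phase n m i a b)"
  unfolding prepare_phase_def using cs_circuit_CZ_fan[of m i n "support_from n m i b"] by (auto simp: set_support_from cs_circuit_def cs_gate_def)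

lemma cs_gate_fixes_low: "cs_gate n m g \<Longrightarrow> q < m \<Longrightarrow> gate_action g (Xvec q) = Xvec q \<and> gate_action g (Zvec q) = Zvec q"
  by (cases g) (auto simp: cs_gate_def Xvec_def Zvec_def cnot_map_def bit_exp_iff)

lemma cs_circuit_fixes_low: "cs_circuit n m p \<Longrightarrow> q < m \<Longrightarrow> circuit_action p (Xvec q) = Xvec q \<and> circuit_action p (Zvec q) = Zvec q"
  by (induction p) (auto simp: cs_circuit_def cs_gate_fixes_low)

lemma cs_gate_commute_H: "cs_gate n (Suc m) g \<Longrightarrow> gate_action g (gate_action (H m) v) = gate_action (H m) (gate_action g v)"
  by (cases g; rule pair_bit_eqI) (auto simp: cs_gate_def bit_gate_action)

lemma cs_circuit_commute_H: "cs_circuit n (Suc m) p \<Longrightarrow> circuit_action p (gate_action (H m) v) = gate_action (H m) (circuit_action p v)"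
proof (induction p arbitrary: v)
  case Nil then show ?case by simp
next
  case (Cons g p)
  have "cs_gate n (Suc m) g" "cs_circuit n (Suc m) p" using Cons.prems by (auto simp: cs_circuit_def)
  then show ?case using Cons.IH by (simp only: circuit_action.simps cs_gate_commute_H)
qed

definition H_layer :: "nat \<Rightarrow> nat \<Rightarrow> gate list \<Rightarrow> bool" where
  "H_layer n m hs = (\<forall>g\<in>set hs. \<exists>q. g = H q \<and> m \<le> q \<and> q < n)"

definition fixes_below :: "nat \<Rightarrow> gate list \<Rightarrow> bool" where
  "fixes_below m c = (\<forall>q<m. circuit_action c (Xvec q) = Xvec q \<and> circuit_action c (Zvec q) = Zvec q)"

text \<open>Bit \<open>q\<close> of \<open>v\<close> is its symplectic product with \<open>X\<^sub>q\<close> or \<open>Z\<^sub>q\<close>, which the circuit preserves.\<close>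
lemma fixes_below_bits:
  assumes wc: "wf_circuit n c" and fixed: "fixes_below m c" and q: "q < m" "m \<le> n"
  shows "bt (fst (circuit_action c v)) q = bt (fst v) q" "bt (snd (circuit_action c v)) q = bt (snd v) q"
proof -
  have qn: "q < n" using q by simp
  have "symp n (circuit_action c v) (Zvec q) = symp n v (Zvec q)"
    using symp_circuit_action[OF wc, of v "Zvec q"] fixed q by (simp add: fixes_below_def)
  then show "bt (fst (circuit_action c v)) q = bt (fst v) q" by (simp add: symp_Zvec[OF qn])
  have "symp n (circuit_action c v) (Xvec q) = symp n v (Xvec q)"
    using symp_circuit_action[OF wc, of v "Xvec q"] fixed q by (simp add: fixes_below_def)
  then show "bt (snd (circuit_action c v)) q = bt (snd v) q" by (simp add: symp_Xvec[OF qn])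
qed

lemma cs_circuit_to_Zvec:
  assumes u: "vbounded n u" "u \<noteq> (0,0)" "\<forall>q<m. \<not> bt (fst u) q \<and> \<not> bt (snd u) q"
  shows "\<exists>p e. cs_circuit n m p \<and> (e = [] \<or> e = [H m]) \<and> circuit_action (rev p @ e) u = Zvec m"
proof (cases "fst u = 0")
  case False
  obtain i where i: "bt (fst u) i" using exists_bit_nonzero[OF False] by blast
  have im: "m \<le> i" using u(3) i by (meson not_le)
  have iN: "i < n" using i u(1) less_exp_bitD by (auto simp: vbounded_def)
  define p where "p = prepare_X n m i (fst u) @ prepare_phase n m i (fst u) (snd u)"
  have pp: "cs_circuit n m p" using cs_circuit_prepare_X[OF im iN] cs_circuit_prepare_phase[OF im iN] by (simp add: p_def)
  have "circuit_action p (Xvec m) = u"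
    unfolding p_def circuit_action_append using prepare_X_action[OF i im iN] prepare_phase_action[OF i im iN] u
    by (simp add: vbounded_def)
  then have "circuit_action (rev p) u = Xvec m" using circuit_action_rev[OF cs_circuit_wf[OF pp], of "Xvec m"] by simp
  then have "circuit_action (rev p @ [H m]) u = Zvec m"
    by (simp add: circuit_action_append Xvec_def Zvec_def bit_exp_iff)
  then show ?thesis using pp by blast
next
  case True
  then have "snd u \<noteq> 0" using u(2) by (cases u) auto
  then obtain i where i: "bt (snd u) i" using exists_bit_nonzero by blast
  have im: "m \<le> i" using u(3) i by (meson not_le)
  have iN: "i < n" using i u(1) less_exp_bitD by (auto simp: vbounded_def)
  have pp: "cs_circuit n m (prepare_Z n m i (snd u))" using cs_circuit_prepare_Z[OF im iN] .
  have "circuit_action (prepare_Z n m i (snd u)) (Zvec m) = u"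
    using prepare_Z_action[OF i im iN] u True by (cases u) (simp add: vbounded_def)
  then have "circuit_action (rev (prepare_Z n m i (snd u)) @ []) u = Zvec m"
    using circuit_action_rev[OF cs_circuit_wf[OF pp], of "Zvec m"] by simp
  then show ?thesis using pp by blast
qed

lemma cs_circuit_from_Xvec:
  assumes v: "vbounded n v" "bt (fst v) m" "\<forall>q<m. \<not> bt (fst v) q \<and> \<not> bt (snd v) q" and mn: "m < n"
  shows "\<exists>r. cs_circuit n m r \<and> circuit_action r (Xvec m) = v \<and> circuit_action r (Zvec m) = Zvec m"
proof (intro exI conjI)
  define r where "r = prepare_X n m m (fst v) @ prepare_phase n m m (fst v) (snd v)"
  show "cs_circuit n m r"
    using cs_circuit_prepare_X[OF _ mn] cs_circuit_prepare_phase[OF _ mn] by (simp add: r_def)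
  show "circuit_action r (Xvec m) = v"
    unfolding r_def circuit_action_append using prepare_X_action[OF v(2) _ mn] prepare_phase_action[OF v(2) _ mn] v
    by (simp add: vbounded_def)
  show "circuit_action r (Zvec m) = Zvec m"
    unfolding r_def circuit_action_append using prepare_X_Zvec prepare_phase_Z_action by (simp add: Zvec_def)
qed

lemma fixes_below_fix_Zvec:
  assumes wc: "wf_circuit n c" and fixed: "fixes_below m c" and mn: "m < n"
  shows "\<exists>p e. cs_circuit n m p \<and> (e = [] \<or> e = [H m]) \<and> fixes_below m (c @ rev p @ e) \<and>
    circuit_action (c @ rev p @ e) (Zvec m) = Zvec m"
proof -
  define u where "u = circuit_action c (Zvec m)"
  have ubd: "vbounded n u" using vbounded_circuit_action[OF wc] mn by (simp add: u_def vbounded_def Zvec_def)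
  have ulow: "\<not> bt (fst u) q \<and> \<not> bt (snd u) q" if "q < m" for q
    using fixes_below_bits[OF wc fixed that] mn that by (simp add: u_def Zvec_def bit_exp_iff)
  have "u \<noteq> (0,0)"
  proof
    assume "u = (0,0)"
    then have "Zvec m = (0,0)"
      using circuit_action_rev[OF wc, of "Zvec m"] circuit_action_0[of n "rev c"] wc by (simp add: u_def)
    then show False by (simp add: Zvec_def)
  qed
  then obtain p e where p: "cs_circuit n m p" and e: "e = [] \<or> e = [H m]"
    and pe: "circuit_action (rev p @ e) u = Zvec m"
    using cs_circuit_to_Zvec[OF ubd] ulow by blast
  have "fixes_below m (c @ rev p @ e)"
    using fixed cs_circuit_fixes_low[of n m "rev p"] p e
    by (auto simp: fixes_below_def circuit_action_append Xvec_def Zvec_def bit_exp_iff)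
  moreover have "circuit_action (c @ rev p @ e) (Zvec m) = Zvec m"
    using pe by (simp add: circuit_action_append u_def)
  ultimately show ?thesis using p e by blast
qed

lemma fixes_below_step:
  assumes wc: "wf_circuit n c" and "fixes_below m c" and mn: "m < n"
  shows "\<exists>p e r. cs_circuit n m p \<and> (e = [] \<or> e = [H m]) \<and> cs_circuit n m r \<and>
    fixes_below (Suc m) (r @ c @ rev p @ e)"
proof -
  obtain p e where p: "cs_circuit n m p" and e: "e = [] \<or> e = [H m]"
    and fix1: "fixes_below m (c @ rev p @ e)" and c1Z: "circuit_action (c @ rev p @ e) (Zvec m) = Zvec m"
    using fixes_below_fix_Zvec[OF assms] by blast
  define c1 where "c1 = c @ rev p @ e"
  have wc1: "wf_circuit n c1" using wc cs_circuit_wf[OF p] e mn by (auto simp: c1_def wf_circuit_def wf_gate_def)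
  define v where "v = circuit_action (rev c1) (Xvec m)"
  have c1v: "circuit_action c1 v = Xvec m" using circuit_action_rev'[OF wc1] by (simp add: v_def)
  have vbd: "vbounded n v" using vbounded_circuit_action[of n "rev c1"] wc1 mn by (simp add: v_def vbounded_def Xvec_def)
  have vlow: "\<not> bt (fst v) q \<and> \<not> bt (snd v) q" if "q < m" for q
    using fixes_below_bits[OF wc1 fix1[folded c1_def] that, of v] mn that by (simp add: c1v Xvec_def bit_exp_iff)
  have "symp n v (Zvec m) = symp n (Xvec m) (Zvec m)"
    using symp_circuit_action[OF wc1, of v "Zvec m"] c1v c1Z by (simp add: c1_def)
  then have vm: "bt (fst v) m" using symp_Xvec_Zvec[OF mn] symp_Zvec[OF mn, of v] by simp
  obtain r where r: "cs_circuit n m r" "circuit_action r (Xvec m) = v" "circuit_action r (Zvec m) = Zvec m"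
    using cs_circuit_from_Xvec[OF vbd vm _ mn] vlow by blast
  have "fixes_below (Suc m) (r @ c1)"
    unfolding fixes_below_def
  proof (intro allI impI)
    fix q assume "q < Suc m"
    then consider "q = m" | "q < m" by linarith
    then show "circuit_action (r @ c1) (Xvec q) = Xvec q \<and> circuit_action (r @ c1) (Zvec q) = Zvec q"
      by cases (use r c1v c1Z cs_circuit_fixes_low[OF r(1)] fix1 in \<open>auto simp: circuit_action_append fixes_below_def c1_def\<close>)
  qed
  then show ?thesis using p e r by (auto simp: c1_def)
qed

text \<open>Undoing the conjugation of \<open>fixes_below_step\<close>: \<open>H\<^sub>m\<close> commutes with CNOT-phase circuits on
  the qubits above \<open>m\<close>, so it joins the Hadamard layer.\<close>
lemma same_action_unconjugate:
  assumes wf: "wf_circuit n p" "wf_circuit n r" and e: "e = [] \<or> e = [H m]" and mn: "m < n"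
    and p1: "cs_circuit n (Suc m) p1" and same: "same_action n (r @ c @ rev p @ e) (p2 @ hs @ p1)"
  shows "same_action n c ((rev r @ p2) @ (hs @ e) @ (p1 @ p))"
  unfolding same_action_def
proof (intro allI impI)
  fix w assume w: "vbounded n w"
  have e_inv: "circuit_action e (circuit_action e x) = x" for x
    using e gate_action_involution[of n "H m" x] mn by (auto simp: wf_gate_def)
  have e_comm: "circuit_action e (circuit_action p1 x) = circuit_action p1 (circuit_action e x)" for x
    using e cs_circuit_commute_H[OF p1, of x] by auto
  define w' where "w' = circuit_action (rev r) w"
  have "vbounded n w'" using vbounded_circuit_action wf w by (simp add: w'_def)
  then have "circuit_action (r @ c @ rev p @ e) w' = circuit_action (p2 @ hs @ p1) w'"
    using same unfolding same_action_def by blast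
  then have A: "circuit_action e (circuit_action (rev p) (circuit_action c w)) =
      circuit_action p1 (circuit_action hs (circuit_action p2 w'))"
    using circuit_action_rev'[OF wf(2)] by (simp add: circuit_action_append w'_def)
  have "circuit_action ((rev r @ p2) @ (hs @ e) @ (p1 @ p)) w
      = circuit_action p (circuit_action e (circuit_action p1 (circuit_action hs (circuit_action p2 w'))))"
    by (simp add: circuit_action_append w'_def e_comm)
  also have "\<dots> = circuit_action p (circuit_action (rev p) (circuit_action c w))" by (simp only: A[symmetric] e_inv)
  also have "\<dots> = circuit_action c w" using circuit_action_rev'[OF wf(1)] by simp
  finally show "circuit_action c w = circuit_action ((rev r @ p2) @ (hs @ e) @ (p1 @ p)) w" by simp
qed

lemma action_normal_form:
  assumes "m \<le> n" "wf_circuit n c" "fixes_below m c"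
  shows "\<exists>p1 hs p2. cs_circuit n m p1 \<and> cs_circuit n m p2 \<and> H_layer n m hs \<and> length hs \<le> n - m \<and>
           same_action n c (p2 @ hs @ p1)"
  using assms
proof (induction "n - m" arbitrary: m c)
  case 0
  then have mn: "m = n" by simp
  have "circuit_action c v = v" if "vbounded n v" for v
    by (rule vxor_hom_fixing_basis[of "circuit_action c" n])
      (use circuit_action_vxor[OF "0.prems"(2)] "0.prems"(3) mn that in \<open>auto simp: fixes_below_def\<close>)
  then show ?case by (intro exI[of _ "[]"]) (auto simp: cs_circuit_def H_layer_def same_action_def)
next
  case (Suc k)
  note wc = Suc.prems(2)
  have mn: "m < n" using Suc.hyps(2) by simp
  obtain p e r where p: "cs_circuit n m p" and e: "e = [] \<or> e = [H m]" and r: "cs_circuit n m r"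
    and fixed: "fixes_below (Suc m) (r @ c @ rev p @ e)"
    using fixes_below_step[OF wc Suc.prems(3) mn] by blast
  have wpr: "wf_circuit n p" "wf_circuit n r" using p r cs_circuit_wf by auto
  have we: "wf_circuit n e" using e mn by (auto simp: wf_circuit_def wf_gate_def)
  obtain p1 hs p2 where IH: "cs_circuit n (Suc m) p1" "cs_circuit n (Suc m) p2" "H_layer n (Suc m) hs"
      "length hs \<le> n - Suc m" "same_action n (r @ c @ rev p @ e) (p2 @ hs @ p1)"
    using Suc.hyps(1)[of "Suc m" "r @ c @ rev p @ e"] Suc.hyps(2) wc wpr we fixed by fastforce
  have "same_action n c ((rev r @ p2) @ (hs @ e) @ (p1 @ p))"
    by (rule same_action_unconjugate[OF wpr e mn IH(1,5)])
  moreover have "H_layer n m (hs @ e)" using IH(3) e mn by (auto simp: H_layer_def)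
  moreover have "length (hs @ e) \<le> n - m" using IH(4) e mn by auto
  moreover have "cs_circuit n m (p1 @ p)" "cs_circuit n m (rev r @ p2)"
    using cs_circuit_mono[OF _ IH(1)] cs_circuit_mono[OF _ IH(2)] p r by auto
  ultimately show ?case by blast
qed

section \<open>Synthesis of invertible GF(2) matrices from CNOTs\<close>

text \<open>A GF(2) matrix is given by its columns \<open>A k\<close>, as bit masks.  \<open>row_add c t\<close> adds
  row \<open>c\<close> to row \<open>t\<close>, which is the effect of \<open>CNOT c t\<close> on every column.\<close>
fun gf2_apply :: "nat \<Rightarrow> (nat \<Rightarrow> nat) \<Rightarrow> nat \<Rightarrow> nat" where
  "gf2_apply 0 A x = 0"
| "gf2_apply (Suc n) A x = gf2_apply n A x XOR (if bt x n then A n else 0)"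

lemma gf2_apply_hom: "(\<And>x y. h (x XOR y) = h x XOR h y) \<Longrightarrow> gf2_apply n (\<lambda>k. h (A k)) x = h (gf2_apply n A x)"
proof (induction n)
  case 0
  have "h 0 = h 0 XOR h 0" using 0[of 0 0] by simp
  then show ?case by simp
next
  case (Suc n)
  have h0: "h 0 = 0" using Suc.prems[of 0 0] by simp
  show ?case using Suc by (simp add: h0)
qed

lemma gf2_apply_less_exp: "(\<forall>k<n. A k < 2^N) \<Longrightarrow> gf2_apply n A x < 2^N"
  by (induction n) auto

lemma gf2_apply_xor: "gf2_apply n A (x XOR y) = gf2_apply n A x XOR gf2_apply n A y"
  by (induction n) (auto simp: bit_xor_iff xor.assoc xor.left_commute)

lemma gf2_apply_low: "x < 2^j \<Longrightarrow> j \<le> n \<Longrightarrow> gf2_apply n A x = gf2_apply j A x"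
proof (induction n)
  case 0 then show ?case by simp
next
  case (Suc n)
  show ?case
  proof (cases "j = Suc n")
    case False
    then have "j \<le> n" using Suc by simp
    moreover have "\<not> bt x n" using Suc.prems \<open>j \<le> n\<close> less_exp_bitD by fastforce
    ultimately show ?thesis using Suc by simp
  qed simp
qed

lemma xor_hom_eq_gf2_apply:
  assumes lin: "\<And>x y. f (x XOR y) = f x XOR f y" and a: "a < 2^n"
  shows "f a = gf2_apply n (\<lambda>k. f (2^k)) a"
proof -
  have f0: "f 0 = 0" using lin[of 0 0] by simp
  have "k \<le> n \<Longrightarrow> f (of_bits k (bt a)) = gf2_apply k (\<lambda>k. f (2^k)) a" for k
  proof (induction k)
    case 0 then show ?case using f0 by simp
  next
    case (Suc k)
    then show ?case using f0 by (simp add: lin)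
  qed
  from this[of n] show ?thesis using a by (simp add: of_bits_bit)
qed

definition row_add :: "nat \<Rightarrow> nat \<Rightarrow> (nat \<Rightarrow> nat) \<Rightarrow> (nat \<Rightarrow> nat)" where
  "row_add c t A = (\<lambda>k. cnot_map c t (A k))"

fun row_adds :: "(nat \<times> nat) list \<Rightarrow> (nat \<Rightarrow> nat) \<Rightarrow> (nat \<Rightarrow> nat)" where
  "row_adds [] A = A"
| "row_adds ((c,t) # os) A = row_adds os (row_add c t A)"

lemma row_adds_append: "row_adds (x @ y) A = row_adds y (row_adds x A)"
  by (induction x arbitrary: A) auto

definition valid_ops :: "nat \<Rightarrow> (nat \<times> nat) list \<Rightarrow> bool" where
  "valid_ops n os = (\<forall>(c,t)\<in>set os. c < n \<and> t < n \<and> c \<noteq> t)"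

lemma valid_ops_append[simp]: "valid_ops n (x @ y) = (valid_ops n x \<and> valid_ops n y)"
  by (auto simp: valid_ops_def)

definition gf2_invertible :: "nat \<Rightarrow> (nat \<Rightarrow> nat) \<Rightarrow> bool" where
  "gf2_invertible n A = ((\<forall>k<n. A k < 2^n) \<and> inj_on (gf2_apply n A) {..<2^n})"

lemma gf2_invertible_row_add: "c < n \<Longrightarrow> t < n \<Longrightarrow> c \<noteq> t \<Longrightarrow> gf2_invertible n A \<Longrightarrow> gf2_invertible n (row_add c t A)"
proof -
  assume ct: "c < n" "t < n" "c \<noteq> t" and o: "gf2_invertible n A"
  have e: "gf2_apply n (row_add c t A) x = cnot_map c t (gf2_apply n A x)" for x
    unfolding row_add_def by (rule gf2_apply_hom) (simp add: cnot_map_xor[OF ct(3)])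
  have "inj_on (cnot_map c t \<circ> gf2_apply n A) {..<2^n}"
    using o inj_cnot_map[OF ct(3)] by (auto simp: gf2_invertible_def intro: comp_inj_on inj_on_subset)
  moreover have "gf2_apply n (row_add c t A) = cnot_map c t \<circ> gf2_apply n A" by (rule ext) (simp add: e)
  ultimately have "inj_on (gf2_apply n (row_add c t A)) {..<2^n}" by simp
  then show ?thesis using o ct by (auto simp: gf2_invertible_def row_add_def)
qed

lemma gf2_invertible_row_adds: "valid_ops n os \<Longrightarrow> gf2_invertible n A \<Longrightarrow> gf2_invertible n (row_adds os A)"
  by (induction os arbitrary: A) (auto simp: valid_ops_def gf2_invertible_row_add)

definition upper_unitri_upto :: "nat \<Rightarrow> (nat \<Rightarrow> nat) \<Rightarrow> bool" where
  "upper_unitri_upto j A = (\<forall>k<j. bt (A k) k \<and> (\<forall>r. k < r \<longrightarrow> \<not> bt (A k) r))"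

definition lower_unitri :: "nat \<Rightarrow> (nat \<Rightarrow> nat) \<Rightarrow> bool" where
  "lower_unitri n A = (\<forall>k<n. bt (A k) k \<and> (\<forall>r<k. \<not> bt (A k) r))"

definition downward :: "(nat \<times> nat) list \<Rightarrow> bool" where
  "downward os = (\<forall>(c,t)\<in>set os. c < t)"

lemma downward_append[simp]: "downward (x @ y) = (downward x \<and> downward y)"
  by (auto simp: downward_def)

lemma lower_unitri_row_add: "c < t \<Longrightarrow> lower_unitri n A \<Longrightarrow> lower_unitri n (row_add c t A)"
  unfolding lower_unitri_def row_add_def by (auto simp: bit_cnot_map)

lemma lower_unitri_row_adds: "downward os \<Longrightarrow> lower_unitri n A \<Longrightarrow> lower_unitri n (row_adds os A)"
  by (induction os arbitrary: A) (auto simp: downward_def lower_unitri_row_add)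

lemma upper_unitri_upto_row_add: "s \<le> c \<Longrightarrow> c \<noteq> t \<Longrightarrow> upper_unitri_upto s A \<Longrightarrow> upper_unitri_upto s (row_add c t A)"
proof -
  assume a: "s \<le> c" "c \<noteq> t" "upper_unitri_upto s A"
  have "row_add c t A k = A k" if "k < s" for k
    using a that by (auto simp: row_add_def cnot_map_def upper_unitri_upto_def)
  then show ?thesis using a(3) by (simp add: upper_unitri_upto_def)
qed

lemma upper_unitri_upto_row_adds: "\<forall>(c,t)\<in>set os. s \<le> c \<and> c \<noteq> t \<Longrightarrow> upper_unitri_upto s A \<Longrightarrow> upper_unitri_upto s (row_adds os A)"
  by (induction os arbitrary: A) (auto simp: upper_unitri_upto_row_add)

lemma upper_unitri_upto_less_exp: "upper_unitri_upto j A \<Longrightarrow> k < j \<Longrightarrow> A k < 2^(Suc k)"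
  by (rule less_expI) (metis upper_unitri_upto_def not_less_eq)

lemma upper_unitri_upto_0: "upper_unitri_upto 0 A" by (simp add: upper_unitri_upto_def)

text \<open>Otherwise the first \<open>c + 1\<close> columns would lie in the span of the first \<open>c\<close> unit vectors.\<close>
lemma exists_pivot:
  assumes o: "gf2_invertible n A" and l: "upper_unitri_upto c A" and cn: "c < n"
  shows "\<exists>r. c \<le> r \<and> r < n \<and> bt (A c) r"
proof (rule ccontr)
  assume no: "\<not> (\<exists>r. c \<le> r \<and> r < n \<and> bt (A c) r)"
  have Acn: "A c < 2^n" using o cn by (simp add: gf2_invertible_def)
  have Ac: "A c < 2^c"
  proof (rule less_expI)
    fix q assume "bt (A c) q"
    then have "q < n" using Acn less_exp_bitD by blast
    then show "q < c" using no \<open>bt (A c) q\<close> by (meson not_le)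
  qed
  have Ak: "\<forall>k<Suc c. A k < 2^c"
  proof (intro allI impI)
    fix k assume "k < Suc c"
    then show "A k < 2^c"
    proof (cases "k = c")
      case False
      then have "k < c" using \<open>k < Suc c\<close> by simp
      then have "A k < 2^(Suc k)" using upper_unitri_upto_less_exp[OF l] by simp
      also have "\<dots> \<le> 2^c" using power_increasing[of "Suc k" c "2::nat"] \<open>k < c\<close> by simp
      finally show ?thesis .
    qed (use Ac in simp)
  qed
  have "(2::nat)^(Suc c) \<le> 2^n" using power_increasing[of "Suc c" n "2::nat"] cn by simp
  then have sub: "{..<2^(Suc c)} \<subseteq> {..<(2::nat)^n}" by auto
  have inj: "inj_on (gf2_apply n A) {..<2^(Suc c)}" using o sub by (auto simp: gf2_invertible_def intro: inj_on_subset)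
  have img: "gf2_apply n A ` {..<2^(Suc c)} \<subseteq> {..<2^c}"
  proof
    fix y assume "y \<in> gf2_apply n A ` {..<2^(Suc c)}"
    then obtain x where x: "x < 2^Suc c" "y = gf2_apply n A x" by auto
    have "gf2_apply n A x = gf2_apply (Suc c) A x" using gf2_apply_low[OF x(1)] cn by simp
    also have "\<dots> < 2^c" using gf2_apply_less_exp[OF Ak] .
    finally show "y \<in> {..<2^c}" using x by simp
  qed
  have "card {..<(2::nat)^(Suc c)} \<le> card {..<(2::nat)^c}"
    using card_inj_on_le[OF inj img] by simp
  then show False by simp
qed

lemma row_adds_from_row: "c \<notin> set rs \<Longrightarrow> row_adds (map (\<lambda>r. (c, r)) rs) A = (\<lambda>k. A k XOR (if bt (A k) c then mask rs else 0))"
proof (induction rs arbitrary: A)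
  case Nil then show ?case by (simp add: fun_eq_iff)
next
  case (Cons r rs)
  have "row_adds (map (\<lambda>r. (c, r)) (r # rs)) A = row_adds (map (\<lambda>r. (c, r)) rs) (row_add c r A)" by simp
  also have "\<dots> = (\<lambda>k. row_add c r A k XOR (if bt (row_add c r A k) c then mask rs else 0))" using Cons by simp
  also have "\<dots> = (\<lambda>k. A k XOR (if bt (A k) c then mask (r # rs) else 0))"
  proof
    fix k
    have "r \<noteq> c" using Cons by auto
    then have b: "bt (row_add c r A k) c = bt (A k) c" by (auto simp: row_add_def bit_cnot_map)
    show "row_add c r A k XOR (if bt (row_add c r A k) c then mask rs else 0) = A k XOR (if bt (A k) c then mask (r # rs) else 0)"
      unfolding b by (auto simp: row_add_def cnot_map_def xor.assoc)
  qed
  finally show ?case .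
qed

definition block_pattern :: "nat \<Rightarrow> nat \<Rightarrow> (nat \<Rightarrow> nat) \<Rightarrow> nat \<Rightarrow> nat" where
  "block_pattern s w A r = of_bits w (\<lambda>i. bt (A (s+i)) r)"

lemma block_pattern_row_add: "c \<noteq> t \<Longrightarrow> block_pattern s w (row_add c t A) r = (if r = t then block_pattern s w A t XOR block_pattern s w A c else block_pattern s w A r)"
  by (rule bit_eqI) (auto simp: block_pattern_def bit_of_bits row_add_def bit_cnot_map bit_xor_iff)

lemma block_pattern_less_exp: "block_pattern s w A r < 2^w"
  by (simp add: block_pattern_def of_bits_less_exp)

definition pattern_rows :: "nat \<Rightarrow> nat \<Rightarrow> nat \<Rightarrow> nat \<Rightarrow> (nat \<Rightarrow> nat) \<Rightarrow> nat set" where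
  "pattern_rows s' n s w A = {r. s' \<le> r \<and> r < n \<and> block_pattern s w A r \<noteq> 0}"

lemma finite_pattern_rows: "finite (pattern_rows s' n s w A)"
  by (rule finite_subset[of _ "{..<n}"]) (auto simp: pattern_rows_def)

definition distinct_patterns :: "nat \<Rightarrow> nat \<Rightarrow> nat \<Rightarrow> nat \<Rightarrow> (nat \<Rightarrow> nat) \<Rightarrow> bool" where
  "distinct_patterns lo hi s w A = (\<forall>r1 r2. lo \<le> r1 \<longrightarrow> r1 < r2 \<longrightarrow> r2 < hi \<longrightarrow>
     block_pattern s w A r1 = block_pattern s w A r2 \<longrightarrow> block_pattern s w A r2 = 0)"

lemma distinct_patterns_Suc:
  assumes "distinct_patterns lo hi s w A"
    and "\<And>r. lo \<le> r \<Longrightarrow> r < hi \<Longrightarrow> block_pattern s w A r = block_pattern s w A hi \<Longrightarrow> block_pattern s w A hi = 0"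
  shows "distinct_patterns lo (Suc hi) s w A"
  using assms unfolding distinct_patterns_def by (metis less_Suc_eq)

lemma distinct_patterns_cancel_duplicate:
  assumes dp: "distinct_patterns lo hi s w A" and r1: "lo \<le> r1" "r1 < hi"
    and same: "block_pattern s w A r1 = block_pattern s w A hi"
  shows "distinct_patterns lo (Suc hi) s w (row_add r1 hi A)"
proof -
  have P: "block_pattern s w (row_add r1 hi A) r = (if r = hi then 0 else block_pattern s w A r)" for r
    using r1 same by (simp add: block_pattern_row_add)
  have "distinct_patterns lo hi s w (row_add r1 hi A)"
    using dp unfolding distinct_patterns_def P by auto
  then show ?thesis by (rule distinct_patterns_Suc) (simp add: P)
qed

text \<open>Adding an earlier row with the same block pattern to each later duplicate leaves
  only distinct nonzero patterns, at the cost of one CNOT per row.\<close>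
lemma dedupe_patterns:
  "s' + d \<le> n \<Longrightarrow> \<exists>os. valid_ops n os \<and> length os \<le> d \<and> (\<forall>(c,t)\<in>set os. s' \<le> c \<and> c < t) \<and>
    distinct_patterns s' (s' + d) s w (row_adds os A)"
proof (induction d)
  case 0 then show ?case by (intro exI[of _ "[]"]) (auto simp: valid_ops_def distinct_patterns_def)
next
  case (Suc d)
  then obtain os where os: "valid_ops n os" "length os \<le> d" "\<forall>(c,t)\<in>set os. s' \<le> c \<and> c < t"
    "distinct_patterns s' (s' + d) s w (row_adds os A)"
    by auto
  define A1 where "A1 = row_adds os A"
  show ?case
  proof (cases "\<exists>r1. s' \<le> r1 \<and> r1 < s' + d \<and> block_pattern s w A1 r1 = block_pattern s w A1 (s' + d)")
    case True
    then obtain r1 where r1: "s' \<le> r1" "r1 < s' + d" "block_pattern s w A1 r1 = block_pattern s w A1 (s' + d)"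
      by blast
    have "distinct_patterns s' (s' + Suc d) s w (row_adds (os @ [(r1, s' + d)]) A)"
      using distinct_patterns_cancel_duplicate[OF os(4)[folded A1_def] r1]
      by (simp add: row_adds_append A1_def)
    moreover have "valid_ops n (os @ [(r1, s' + d)])" using os(1) r1 Suc.prems by (auto simp: valid_ops_def)
    ultimately show ?thesis using os(2,3) r1 by (intro exI[of _ "os @ [(r1, s' + d)]"]) auto
  next
    case False
    then have "distinct_patterns s' (s' + Suc d) s w A1"
      using distinct_patterns_Suc[OF os(4)[folded A1_def]] by auto
    then show ?thesis using os(1-3) by (auto simp: A1_def)
  qed
qed

lemma card_pattern_rows:
  assumes "distinct_patterns s' n s w A"
  shows "card (pattern_rows s' n s w A) \<le> 2^w"
proof -
  have inj: "inj_on (block_pattern s w A) (pattern_rows s' n s w A)"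
  proof (rule inj_onI, rule ccontr)
    fix a b assume ab: "a \<in> pattern_rows s' n s w A" "b \<in> pattern_rows s' n s w A"
      "block_pattern s w A a = block_pattern s w A b" "a \<noteq> b"
    then consider "a < b" | "b < a" by linarith
    then show False
    proof cases
      case 1
      have "block_pattern s w A b = 0"
        using assms 1 ab(1-3) unfolding distinct_patterns_def pattern_rows_def by blast
      then show False using ab(2) by (simp add: pattern_rows_def)
    next
      case 2
      have "block_pattern s w A a = 0"
        using assms 2 ab(1-3) unfolding distinct_patterns_def pattern_rows_def by (metis (mono_tags, lifting) mem_Collect_eq)
      then show False using ab(1) by (simp add: pattern_rows_def)
    qed
  qed
  have "block_pattern s w A ` pattern_rows s' n s w A \<subseteq> {..<2^w}" using block_pattern_less_exp by auto
  from card_inj_on_le[OF inj this] show ?thesis by simp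
qed

lemma eliminate_column_pivot:
  assumes o: "gf2_invertible n A" and l: "upper_unitri_upto c A" and sc: "s \<le> c" "c < s + w" and sw: "s + w \<le> n"
  shows "\<exists>os. valid_ops n os \<and> length os \<le> 1 \<and> bt (row_adds os A c) c \<and> upper_unitri_upto c (row_adds os A) \<and>
      pattern_rows (s+w) n s w (row_adds os A) = pattern_rows (s+w) n s w A \<and> (\<forall>(c',t)\<in>set os. s \<le> c') \<and>
      (lower_unitri n A \<longrightarrow> os = [])"
proof (cases "bt (A c) c")
  case True then show ?thesis using l by (intro exI[of _ "[]"]) (auto simp: valid_ops_def)
next
  case False
  have cn: "c < n" using sc sw by simp
  obtain r where r: "c \<le> r" "r < n" "bt (A c) r" using exists_pivot[OF o l cn] by blast
  have rc: "r \<noteq> c" using False r by auto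
  have pr: "block_pattern s w (row_add r c A) x = block_pattern s w A x" if "s + w \<le> x" for x
    using block_pattern_row_add[OF rc, of s w A x] that sc by auto
  show ?thesis
  proof (intro exI conjI)
    show "valid_ops n [(r,c)]" using r cn rc by (simp add: valid_ops_def)
    show "bt (row_adds [(r,c)] A c) c" using r False rc by (simp add: row_add_def bit_cnot_map)
    show "upper_unitri_upto c (row_adds [(r,c)] A)" using upper_unitri_upto_row_add[of c r c A] r rc l by simp
    show "pattern_rows (s+w) n s w (row_adds [(r,c)] A) = pattern_rows (s+w) n s w A"
      using pr by (auto simp: pattern_rows_def)
    show "\<forall>(c',t)\<in>set [(r,c)]. s \<le> c'" using r sc by simp
    show "lower_unitri n A \<longrightarrow> [(r,c)] = []" using False cn by (auto simp: lower_unitri_def)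
  qed simp
qed

lemma upper_unitri_upto_clear_column:
  assumes piv: "bt (A c) c" and l: "upper_unitri_upto c A" and Ac: "A c < 2^n"
    and rs: "rs = filter (\<lambda>r. bt (A c) r) [Suc c..<n]"
  shows "upper_unitri_upto (Suc c) (\<lambda>k. A k XOR (if bt (A k) c then mask rs else 0))"
  unfolding upper_unitri_upto_def
proof (intro allI impI conjI)
  fix k assume k: "k < Suc c"
  have rs_bit: "bt (mask rs) r \<longleftrightarrow> bt (A c) r \<and> c < r \<and> r < n" for r
    by (auto simp: rs bit_mask)
  have low: "\<not> bt (A k) c" "bt (A k) k" "\<forall>r>k. \<not> bt (A k) r" if "k < c"
    using l that by (auto simp: upper_unitri_upto_def)
  show "bt (A k XOR (if bt (A k) c then mask rs else 0)) k"
    using k piv low by (cases "k = c") (auto simp: bit_xor_iff rs_bit)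
  fix r assume r: "k < r"
  have "bt (A c) r \<Longrightarrow> r < n" using Ac less_exp_bitD by blast
  then show "\<not> bt (A k XOR (if bt (A k) c then mask rs else 0)) r"
    using k r piv low by (cases "k = c") (auto simp: bit_xor_iff rs_bit)
qed

lemma rows_below_pivot_subset:
  assumes sc: "s \<le> c" "c < s + w"
  shows "set (filter (\<lambda>r. bt (A c) r) [Suc c..<n]) \<subseteq> {Suc c..<s+w} \<union> pattern_rows (s+w) n s w A"
proof
  fix r assume r: "r \<in> set (filter (\<lambda>r. bt (A c) r) [Suc c..<n])"
  show "r \<in> {Suc c..<s+w} \<union> pattern_rows (s+w) n s w A"
  proof (cases "r < s + w")
    case False
    have "bt (block_pattern s w A r) (c - s)" using r sc by (auto simp: block_pattern_def bit_of_bits)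
    then have "block_pattern s w A r \<noteq> 0" by (cases "block_pattern s w A r = 0") auto
    then show ?thesis using r False by (auto simp: pattern_rows_def)
  qed (use r in auto)
qed

text \<open>Clearing column \<open>c\<close> below the pivot costs one CNOT per row inside the block and one
  per row outside it whose block pattern is nonzero.\<close>
lemma eliminate_column_below:
  assumes o: "gf2_invertible n A" and piv: "bt (A c) c" and l: "upper_unitri_upto c A"
    and sc: "s \<le> c" "c < s + w" and sw: "s + w \<le> n"
  shows "\<exists>os. valid_ops n os \<and> length os \<le> (w - 1) + card (pattern_rows (s+w) n s w A) \<and>
    upper_unitri_upto (Suc c) (row_adds os A) \<and> pattern_rows (s+w) n s w (row_adds os A) \<subseteq> pattern_rows (s+w) n s w A \<and>
    (\<forall>(c',t)\<in>set os. c' = c) \<and> downward os"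
proof -
  have cn: "c < n" using sc sw by simp
  define rs where "rs = filter (\<lambda>r. bt (A c) r) [Suc c..<n]"
  have rs_set: "r \<in> set rs \<longleftrightarrow> bt (A c) r \<and> c < r \<and> r < n" for r by (auto simp: rs_def)
  have drs: "distinct rs" by (simp add: rs_def)
  have sub: "set rs \<subseteq> {Suc c..<s+w} \<union> pattern_rows (s+w) n s w A"
    unfolding rs_def by (rule rows_below_pivot_subset[OF sc])
  define os where "os = map (\<lambda>r. (c, r)) rs"
  have A': "row_adds os A = (\<lambda>k. A k XOR (if bt (A k) c then mask rs else 0))"
    unfolding os_def by (rule row_adds_from_row) (simp add: rs_set)
  have "length rs = card (set rs)" using distinct_card[OF drs] by simp
  also have "\<dots> \<le> card ({Suc c..<s+w} \<union> pattern_rows (s+w) n s w A)"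
    by (rule card_mono) (use sub finite_pattern_rows in auto)
  also have "\<dots> \<le> (w - 1) + card (pattern_rows (s+w) n s w A)"
    using card_Un_le[of "{Suc c..<s+w}" "pattern_rows (s+w) n s w A"] sc by simp
  finally have "length os \<le> (w - 1) + card (pattern_rows (s+w) n s w A)" by (simp add: os_def)
  moreover have "pattern_rows (s+w) n s w (row_adds os A) \<subseteq> pattern_rows (s+w) n s w A"
  proof
    fix r assume r: "r \<in> pattern_rows (s+w) n s w (row_adds os A)"
    show "r \<in> pattern_rows (s+w) n s w A"
    proof (cases "r \<in> set rs")
      case False
      have "block_pattern s w (row_adds os A) r = block_pattern s w A r"
        by (rule bit_eqI) (use False in \<open>auto simp: block_pattern_def bit_of_bits A' bit_xor_iff bit_mask[OF drs]\<close>)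
      then show ?thesis using r by (simp add: pattern_rows_def)
    qed (use sub r in \<open>auto simp: pattern_rows_def\<close>)
  qed
  moreover have "upper_unitri_upto (Suc c) (row_adds os A)"
    unfolding A' using o cn by (intro upper_unitri_upto_clear_column[OF piv l _ rs_def]) (simp add: gf2_invertible_def)
  moreover have "valid_ops n os" "\<forall>(c',t)\<in>set os. c' = c" "downward os"
    using cn by (auto simp: valid_ops_def downward_def os_def rs_set)
  ultimately show ?thesis by blast
qed

lemma eliminate_column:
  assumes "gf2_invertible n A" "upper_unitri_upto c A" and sc: "s \<le> c" "c < s + w" and sw: "s + w \<le> n"
  shows "\<exists>os. valid_ops n os \<and> length os \<le> w + card (pattern_rows (s+w) n s w A) \<and> upper_unitri_upto (Suc c) (row_adds os A)
    \<and> pattern_rows (s+w) n s w (row_adds os A) \<subseteq> pattern_rows (s+w) n s w A \<and> (\<forall>(c',t)\<in>set os. s \<le> c') \<and> (lower_unitri n A \<longrightarrow> downward os)"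
proof -
  obtain os1 where os1: "valid_ops n os1" "length os1 \<le> 1" "bt (row_adds os1 A c) c" "upper_unitri_upto c (row_adds os1 A)"
      "pattern_rows (s+w) n s w (row_adds os1 A) = pattern_rows (s+w) n s w A" "\<forall>(c',t)\<in>set os1. s \<le> c'"
      "lower_unitri n A \<longrightarrow> os1 = []"
    using eliminate_column_pivot[OF assms] by blast
  obtain os2 where os2: "valid_ops n os2" "length os2 \<le> (w - 1) + card (pattern_rows (s+w) n s w (row_adds os1 A))"
      "upper_unitri_upto (Suc c) (row_adds os2 (row_adds os1 A))"
      "pattern_rows (s+w) n s w (row_adds os2 (row_adds os1 A)) \<subseteq> pattern_rows (s+w) n s w (row_adds os1 A)"
      "\<forall>(c',t)\<in>set os2. c' = c" "downward os2"
    using eliminate_column_below[OF gf2_invertible_row_adds[OF os1(1) assms(1)] os1(3,4) sc sw] by blast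
  show ?thesis
  proof (intro exI conjI)
    show "valid_ops n (os1 @ os2)" using os1(1) os2(1) by simp
    show "length (os1 @ os2) \<le> w + card (pattern_rows (s+w) n s w A)" using os1(2,5) os2(2) sc by simp
    show "upper_unitri_upto (Suc c) (row_adds (os1 @ os2) A)" using os2(3) by (simp add: row_adds_append)
    show "pattern_rows (s+w) n s w (row_adds (os1 @ os2) A) \<subseteq> pattern_rows (s+w) n s w A"
      using os1(5) os2(4) by (simp add: row_adds_append)
    show "\<forall>(c',t)\<in>set (os1 @ os2). s \<le> c'" using os1(6) os2(5) sc by auto
    show "lower_unitri n A \<longrightarrow> downward (os1 @ os2)" using os1(7) os2(6) by simp
  qed
qed

lemma eliminate_columns:
  assumes o: "gf2_invertible n A" and l: "upper_unitri_upto s A" and sw: "s + w \<le> n"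
  shows "j \<le> w \<Longrightarrow> \<exists>os. valid_ops n os \<and> length os \<le> j * (w + card (pattern_rows (s+w) n s w A)) \<and> upper_unitri_upto (s + j) (row_adds os A)
    \<and> pattern_rows (s+w) n s w (row_adds os A) \<subseteq> pattern_rows (s+w) n s w A \<and> (\<forall>(c',t)\<in>set os. s \<le> c') \<and> (lower_unitri n A \<longrightarrow> downward os)"
proof (induction j)
  case 0 then show ?case using l by (intro exI[of _ "[]"]) (auto simp: valid_ops_def downward_def)
next
  case (Suc j)
  then obtain os where os: "valid_ops n os" "length os \<le> j * (w + card (pattern_rows (s+w) n s w A))" "upper_unitri_upto (s + j) (row_adds os A)"
    "pattern_rows (s+w) n s w (row_adds os A) \<subseteq> pattern_rows (s+w) n s w A" "\<forall>(c',t)\<in>set os. s \<le> c'" "lower_unitri n A \<longrightarrow> downward os" by auto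
  define A' where "A' = row_adds os A"
  have o': "gf2_invertible n A'" using gf2_invertible_row_adds[OF os(1) o] by (simp add: A'_def)
  obtain os' where os': "valid_ops n os'" "length os' \<le> w + card (pattern_rows (s+w) n s w A')" "upper_unitri_upto (Suc (s + j)) (row_adds os' A')"
    "pattern_rows (s+w) n s w (row_adds os' A') \<subseteq> pattern_rows (s+w) n s w A'" "\<forall>(c',t)\<in>set os'. s \<le> c'" "lower_unitri n A' \<longrightarrow> downward os'"
    using eliminate_column[OF o' os(3)[folded A'_def], of s w] Suc.prems sw by auto
  have cc: "card (pattern_rows (s+w) n s w A') \<le> card (pattern_rows (s+w) n s w A)"
    by (rule card_mono[OF finite_pattern_rows]) (use os(4) in \<open>simp add: A'_def\<close>)
  show ?case
  proof (intro exI conjI)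
    show "valid_ops n (os @ os')" using os os' by simp
    show "length (os @ os') \<le> Suc j * (w + card (pattern_rows (s+w) n s w A))" using os(2) os'(2) cc by simp
    show "upper_unitri_upto (s + Suc j) (row_adds (os @ os') A)" using os'(3) by (simp add: row_adds_append A'_def)
    show "pattern_rows (s+w) n s w (row_adds (os @ os') A) \<subseteq> pattern_rows (s+w) n s w A" using os'(4) os(4) by (auto simp: row_adds_append A'_def)
    show "\<forall>(c',t)\<in>set (os @ os'). s \<le> c'" using os(5) os'(5) by auto
    show "lower_unitri n A \<longrightarrow> downward (os @ os')" using os(6) os'(6) lower_unitri_row_adds[of os n A] by (auto simp: A'_def)
  qed
qed

lemma eliminate_block:
  assumes o: "gf2_invertible n A" and l: "upper_unitri_upto s A" and sn: "s < n" and m: "1 \<le> m"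
  shows "\<exists>os. valid_ops n os \<and> length os \<le> n + m * (m + 2^m) \<and> upper_unitri_upto (min (s+m) n) (row_adds os A) \<and> (lower_unitri n A \<longrightarrow> downward os)"
proof -
  define w where "w = min (s+m) n - s"
  have sw: "s + w = min (s+m) n" "s + w \<le> n" "w \<le> m" using sn by (auto simp: w_def)
  obtain os1 where os1: "valid_ops n os1" "length os1 \<le> n - (s+w)" "\<forall>(c,t)\<in>set os1. s+w \<le> c \<and> c < t"
    "distinct_patterns (s+w) n s w (row_adds os1 A)"
    using dedupe_patterns[of "s+w" "n - (s+w)" n s w A] sw by auto
  define A1 where "A1 = row_adds os1 A"
  have o1: "gf2_invertible n A1" using gf2_invertible_row_adds[OF os1(1) o] by (simp add: A1_def)
  have l1: "upper_unitri_upto s A1" unfolding A1_def by (rule upper_unitri_upto_row_adds) (use os1(3) l in auto)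
  have cnz: "card (pattern_rows (s+w) n s w A1) \<le> 2^w"
    using card_pattern_rows[OF os1(4)] by (simp add: A1_def)
  obtain os2 where os2: "valid_ops n os2" "length os2 \<le> w * (w + card (pattern_rows (s+w) n s w A1))" "upper_unitri_upto (s + w) (row_adds os2 A1)"
    "lower_unitri n A1 \<longrightarrow> downward os2"
    using eliminate_columns[OF o1 l1 sw(2), of w] by auto
  have "w * (w + card (pattern_rows (s+w) n s w A1)) \<le> m * (m + 2^m)"
  proof -
    have "(2::nat)^w \<le> 2^m" using sw(3) power_increasing[of w m "2::nat"] by simp
    then have "w + card (pattern_rows (s+w) n s w A1) \<le> m + 2^m"
      using cnz sw(3) by linarith
    then show ?thesis using sw(3) by (simp add: mult_le_mono)
  qed
  then have len: "length (os1 @ os2) \<le> n + m * (m + 2^m)" using os1(2) os2(2) by simp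
  have dn1: "downward os1" using os1(3) by (auto simp: downward_def)
  show ?thesis
  proof (intro exI conjI)
    show "valid_ops n (os1 @ os2)" using os1 os2 by simp
    show "length (os1 @ os2) \<le> n + m * (m + 2^m)" by (rule len)
    show "upper_unitri_upto (min (s+m) n) (row_adds (os1 @ os2) A)" using os2(3) sw by (simp add: row_adds_append A1_def)
    show "lower_unitri n A \<longrightarrow> downward (os1 @ os2)" using dn1 os2(4) lower_unitri_row_adds[OF dn1, of n A] by (simp add: A1_def)
  qed
qed

lemma upper_triangularize:
  assumes o: "gf2_invertible n A" and m: "1 \<le> m"
  shows "\<exists>os. valid_ops n os \<and> length os \<le> b * (n + m * (m + 2^m)) \<and> upper_unitri_upto (min (b*m) n) (row_adds os A) \<and> (lower_unitri n A \<longrightarrow> downward os)"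
proof (induction b)
  case 0 then show ?case by (intro exI[of _ "[]"]) (auto simp: valid_ops_def downward_def upper_unitri_upto_0)
next
  case (Suc b)
  then obtain os where os: "valid_ops n os" "length os \<le> b * (n + m * (m + 2^m))" "upper_unitri_upto (min (b*m) n) (row_adds os A)" "lower_unitri n A \<longrightarrow> downward os"
    by auto
  show ?case
  proof (cases "n \<le> b * m")
    case True
    then have "min (Suc b * m) n = min (b * m) n" by simp
    then show ?thesis using os by (intro exI[of _ os]) auto
  next
    case False
    define A' where "A' = row_adds os A"
    have o': "gf2_invertible n A'" using gf2_invertible_row_adds[OF os(1) o] by (simp add: A'_def)
    have l': "upper_unitri_upto (b*m) A'" using os(3) False by (simp add: A'_def)
    obtain os' where os': "valid_ops n os'" "length os' \<le> n + m * (m + 2^m)" "upper_unitri_upto (min (b*m+m) n) (row_adds os' A')" "lower_unitri n A' \<longrightarrow> downward os'"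
      using eliminate_block[OF o' l' _ m] False by auto
    show ?thesis
    proof (intro exI conjI)
      show "valid_ops n (os @ os')" using os os' by simp
      show "length (os @ os') \<le> Suc b * (n + m * (m + 2^m))" using os(2) os'(2) by simp
      show "upper_unitri_upto (min (Suc b * m) n) (row_adds (os @ os') A)" using os'(3) by (simp add: row_adds_append A'_def add.commute)
      show "lower_unitri n A \<longrightarrow> downward (os @ os')" using os(4) os'(4) lower_unitri_row_adds[of os n A] by (auto simp: A'_def)
    qed
  qed
qed

definition bit_reverse :: "nat \<Rightarrow> nat \<Rightarrow> nat" where
  "bit_reverse n x = of_bits n (\<lambda>k. bt x (n - 1 - k))"

lemma bit_bit_reverse: "bt (bit_reverse n x) k = (k < n \<and> bt x (n - 1 - k))"
  by (simp add: bit_reverse_def bit_of_bits)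

lemma bit_reverse_less_exp: "bit_reverse n x < 2^n"
  by (simp add: bit_reverse_def of_bits_less_exp)

lemma bit_reverse_exp: "j < n \<Longrightarrow> bit_reverse n (2^j) = 2^(n - 1 - j)"
  by (rule bit_eqI) (auto simp: bit_bit_reverse bit_exp_iff)

lemma bit_reverse_bit_reverse: "x < 2^n \<Longrightarrow> bit_reverse n (bit_reverse n x) = x"
  by (rule bit_eqI) (auto simp: bit_bit_reverse dest: less_exp_bitD)

lemma cnot_map_bit_reverse: "c < n \<Longrightarrow> t < n \<Longrightarrow> c \<noteq> t \<Longrightarrow> cnot_map (n - Suc c) (n - Suc t) (bit_reverse n x) = bit_reverse n (cnot_map c t x)"
  by (rule bit_eqI) (auto simp: bit_bit_reverse bit_cnot_map)

fun cnot_seq :: "(nat \<times> nat) list \<Rightarrow> nat \<Rightarrow> nat" where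
  "cnot_seq [] x = x"
| "cnot_seq ((c,t) # os) x = cnot_seq os (cnot_map c t x)"

lemma row_adds_eq_cnot_seq: "row_adds os A k = cnot_seq os (A k)"
  by (induction os arbitrary: A) (auto simp: row_add_def)

lemma cnot_seq_append: "cnot_seq (x @ y) v = cnot_seq y (cnot_seq x v)"
  by (induction x arbitrary: v) auto

definition mirror_op :: "nat \<Rightarrow> nat \<times> nat \<Rightarrow> nat \<times> nat" where
  "mirror_op n p = (n - 1 - fst p, n - 1 - snd p)"

lemma cnot_seq_mirror: "valid_ops n os \<Longrightarrow> cnot_seq (map (mirror_op n) os) (bit_reverse n x) = bit_reverse n (cnot_seq os x)"
  by (induction os arbitrary: x) (auto simp: valid_ops_def mirror_op_def cnot_map_bit_reverse)

lemma valid_ops_mirror: "valid_ops n os \<Longrightarrow> valid_ops n (map (mirror_op n) os)"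
  by (auto simp: valid_ops_def mirror_op_def)

lemma cnot_seq_rev: "valid_ops n os \<Longrightarrow> cnot_seq (rev os) (cnot_seq os x) = x"
  by (induction os arbitrary: x) (auto simp: valid_ops_def cnot_seq_append)

lemma lower_unitri_apply_lowest_bit: "lower_unitri n B \<Longrightarrow> l \<le> n \<Longrightarrow> (\<forall>k<l. \<not> bt z k) \<Longrightarrow> bt z l \<Longrightarrow> bt (gf2_apply j B z) l = (l < j)" if "j \<le> n"
  using that
proof (induction j)
  case 0 then show ?case by simp
next
  case (Suc j)
  have jn: "j < n" using Suc by simp
  show ?case
  proof (cases "j < l")
    case True then show ?thesis using Suc by (auto simp: bit_xor_iff)
  next
    case False
    show ?thesis
    proof (cases "j = l")
      case True then show ?thesis using Suc jn by (auto simp: bit_xor_iff lower_unitri_def)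
    next
      case F2: False
      then have "l < j" using False by simp
      then have "\<not> bt (B j) l" using Suc.prems(1) jn by (auto simp: lower_unitri_def)
      then show ?thesis using Suc \<open>l < j\<close> by (auto simp: bit_xor_iff)
    qed
  qed
qed

lemma lower_unitri_invertible:
  assumes l: "lower_unitri n B" and lt: "\<forall>k<n. B k < 2^n"
  shows "gf2_invertible n B"
proof -
  have pattern_rows: "gf2_apply n B z \<noteq> 0" if z: "z < 2^n" "z \<noteq> 0" for z
  proof -
    obtain i where "bt z i" using exists_bit_nonzero[OF z(2)] by blast
    define l where "l = (LEAST i. bt z i)"
    have bl: "bt z l" using \<open>bt z i\<close> by (metis LeastI l_def)
    have ll: "\<forall>k<l. \<not> bt z k" using not_less_Least l_def by blast
    have ln: "l < n" using bl z less_exp_bitD by blast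
    have "bt (gf2_apply n B z) l" using lower_unitri_apply_lowest_bit[OF _ l _ ll bl] ln by simp
    then show ?thesis by (cases "gf2_apply n B z = 0") auto
  qed
  have "inj_on (gf2_apply n B) {..<2^n}"
  proof (rule inj_onI)
    fix x y assume xy: "x \<in> {..<2^n}" "y \<in> {..<2^n}" "gf2_apply n B x = gf2_apply n B y"
    have "gf2_apply n B (x XOR y) = 0" using xy(3) by (simp add: gf2_apply_xor)
    then have "x XOR y = 0" using pattern_rows[of "x XOR y"] xy by auto
    then show "x = y" by (metis xor_cancel(1) xor.left_neutral)
  qed
  then show ?thesis using lt by (simp add: gf2_invertible_def)
qed

lemma unitri_both_eq_exp: "upper_unitri_upto n C \<Longrightarrow> lower_unitri n C \<Longrightarrow> k < n \<Longrightarrow> C k = 2^k"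
  by (rule bit_eqI) (auto simp: upper_unitri_upto_def lower_unitri_def bit_exp_iff, metis linorder_neqE_nat)

lemma le_div_ceil_mult: "1 \<le> m \<Longrightarrow> n \<le> ((n + m - 1) div m) * (m::nat)"
proof -
  assume m: "1 \<le> m"
  have "n + m - 1 = ((n + m - 1) div m) * m + (n + m - 1) mod m" by simp
  moreover have "(n + m - 1) mod m < m" using m by simp
  ultimately show ?thesis by linarith
qed

definition pmh_bound :: "nat \<Rightarrow> nat \<Rightarrow> nat" where
  "pmh_bound n m = 2 * ((n + m - 1) div m) * (n + m * (m + 2^m))"

text \<open>Bit reversal turns the upper unitriangular result of a first pass into a lower
  unitriangular matrix, which a second pass of downward row operations reduces to the identity.\<close>
lemma pmh_reduction:
  assumes o: "gf2_invertible n A" and m: "1 \<le> m"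
  shows "\<exists>os. valid_ops n os \<and> length os \<le> pmh_bound n m \<and> (\<forall>k<n. cnot_seq os (A k) = 2^k)"
proof -
  define b where "b = (n + m - 1) div m"
  have bm: "n \<le> b * m" using le_div_ceil_mult[OF m] by (simp add: b_def)
  obtain os1 where os1: "valid_ops n os1" "length os1 \<le> b * (n + m * (m + 2^m))" "upper_unitri_upto (min (b*m) n) (row_adds os1 A)"
    using upper_triangularize[OF o m] by blast
  define A1 where "A1 = row_adds os1 A"
  have o1: "gf2_invertible n A1" using gf2_invertible_row_adds[OF os1(1) o] by (simp add: A1_def)
  have l1: "upper_unitri_upto n A1" using os1(3) bm by (simp add: A1_def min_absorb2)
  have A1lt: "\<forall>k<n. A1 k < 2^n" using o1 by (simp add: gf2_invertible_def)
  define B where "B = (\<lambda>k. bit_reverse n (A1 (n - 1 - k)))"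
  have lB: "lower_unitri n B" unfolding lower_unitri_def B_def
  proof (rule allI, rule impI, rule conjI)
    fix k assume k: "k < n"
    show "bt (bit_reverse n (A1 (n - 1 - k))) k" using l1 k by (auto simp: bit_bit_reverse upper_unitri_upto_def)
    show "\<forall>r<k. \<not> bt (bit_reverse n (A1 (n - 1 - k))) r" using l1 k by (auto simp: bit_bit_reverse upper_unitri_upto_def)
  qed
  have oB: "gf2_invertible n B" by (rule lower_unitri_invertible[OF lB]) (simp add: B_def bit_reverse_less_exp)
  obtain os2 where os2: "valid_ops n os2" "length os2 \<le> b * (n + m * (m + 2^m))" "upper_unitri_upto (min (b*m) n) (row_adds os2 B)" "lower_unitri n B \<longrightarrow> downward os2"
    using upper_triangularize[OF oB m] by blast
  have l2: "upper_unitri_upto n (row_adds os2 B)" using os2(3) bm by (simp add: min_absorb2)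
  have u2: "lower_unitri n (row_adds os2 B)" using lower_unitri_row_adds[of os2 n B] os2(4) lB by simp
  have id2: "row_adds os2 B k = 2^k" if "k < n" for k using unitri_both_eq_exp[OF l2 u2 that] .
  define os where "os = os1 @ map (mirror_op n) os2"
  have "cnot_seq os (A k) = 2^k" if k: "k < n" for k
  proof -
    have "cnot_seq os (A k) = cnot_seq (map (mirror_op n) os2) (A1 k)" by (simp add: os_def cnot_seq_append A1_def row_adds_eq_cnot_seq)
    also have "A1 k = bit_reverse n (B (n - 1 - k))" using k A1lt bit_reverse_bit_reverse by (simp add: B_def)
    also have "cnot_seq (map (mirror_op n) os2) (bit_reverse n (B (n - 1 - k))) = bit_reverse n (row_adds os2 B (n - 1 - k))"
      using cnot_seq_mirror[OF os2(1)] by (simp add: row_adds_eq_cnot_seq)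
    also have "\<dots> = 2^k" using id2[of "n - 1 - k"] k by (simp add: bit_reverse_exp)
    finally show ?thesis .
  qed
  moreover have "valid_ops n os" using os1(1) valid_ops_mirror[OF os2(1)] by (simp add: os_def)
  moreover have "length os \<le> 2 * b * (n + m * (m + 2^m))" using os1(2) os2(2) by (simp add: os_def)
  ultimately show ?thesis by (auto simp: b_def pmh_bound_def)
qed

definition cnot_circuit :: "nat \<Rightarrow> gate list \<Rightarrow> bool" where
  "cnot_circuit n L = (\<forall>g\<in>set L. \<exists>c t. g = CNOT c t \<and> c < n \<and> t < n \<and> c \<noteq> t)"

lemma cnot_circuit_append[simp]: "cnot_circuit n (x @ y) = (cnot_circuit n x \<and> cnot_circuit n y)"
  by (auto simp: cnot_circuit_def)

lemma cnot_circuit_rev[simp]: "cnot_circuit n (rev x) = cnot_circuit n x"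
  by (auto simp: cnot_circuit_def)

lemma cnot_circuit_wf: "cnot_circuit n L \<Longrightarrow> wf_circuit n L"
  by (auto simp: cnot_circuit_def wf_circuit_def wf_gate_def)

lemma circuit_action_cnot_ops: "circuit_action (map (\<lambda>p. CNOT (fst p) (snd p)) os) (x, 0) = (cnot_seq os x, 0)"
  by (induction os arbitrary: x) (auto simp: cnot_map_def)

lemma pmh_cnot_synthesis:
  assumes "gf2_invertible n A" "1 \<le> m"
  shows "\<exists>L. cnot_circuit n L \<and> length L \<le> pmh_bound n m \<and> (\<forall>k<n. circuit_action L (Xvec k) = (A k, 0))"
proof -
  obtain os where os: "valid_ops n os" "length os \<le> pmh_bound n m" "\<forall>k<n. cnot_seq os (A k) = 2^k"
    using pmh_reduction[OF assms] by blast
  define L where "L = map (\<lambda>p. CNOT (fst p) (snd p)) (rev os)"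
  have "circuit_action L (Xvec k) = (A k, 0)" if "k < n" for k
  proof -
    have "circuit_action L (Xvec k) = (cnot_seq (rev os) (2^k), 0)" by (simp add: L_def Xvec_def circuit_action_cnot_ops)
    also have "\<dots> = (cnot_seq (rev os) (cnot_seq os (A k)), 0)" using os(3) that by simp
    also have "\<dots> = (A k, 0)" using cnot_seq_rev[OF os(1)] by simp
    finally show ?thesis .
  qed
  moreover have "cnot_circuit n L" using os(1) by (auto simp: L_def cnot_circuit_def valid_ops_def)
  ultimately show ?thesis using os(2) by (intro exI[of _ L]) (auto simp: L_def)
qed

lemma cnot_circuit_X_action: "cnot_circuit n q \<Longrightarrow> snd (circuit_action q (a, 0)) = 0"
proof (induction q arbitrary: a)
  case Nil then show ?case by simp
next
  case (Cons g q)
  then obtain c t where g: "g = CNOT c t" "cnot_circuit n q" by (auto simp: cnot_circuit_def)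
  have "gate_action g (a, 0) = (cnot_map c t a, 0)" using g by (simp add: cnot_map_def)
  then show ?case using Cons g by simp
qed

lemma cnot_circuit_Z_action: "cnot_circuit n q \<Longrightarrow> fst (circuit_action q (0, b)) = 0"
proof (induction q arbitrary: b)
  case Nil then show ?case by simp
next
  case (Cons g q)
  then obtain c t where g: "g = CNOT c t" "cnot_circuit n q" by (auto simp: cnot_circuit_def)
  have "gate_action g (0, b) = (0, cnot_map t c b)" using g by (simp add: cnot_map_def)
  then show ?case using Cons g by simp
qed

lemma cnot_circuit_X_action_gf2_apply:
  assumes q: "cnot_circuit n q" and a: "a < 2^n"
  shows "circuit_action q (a, 0) = (gf2_apply n (\<lambda>k. fst (circuit_action q (Xvec k))) a, 0)"
proof -
  define fX where "fX x = fst (circuit_action q (x, 0))" for x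
  have w: "wf_circuit n q" using cnot_circuit_wf[OF q] .
  have lin: "fX (x XOR y) = fX x XOR fX y" for x y
    using circuit_action_vxor[OF w, of "(x,0)" "(y,0)"] by (simp add: fX_def vxor_def)
  have "fX a = gf2_apply n (\<lambda>k. fX (2^k)) a" by (rule xor_hom_eq_gf2_apply[OF lin a])
  then show ?thesis using cnot_circuit_X_action[OF q, of a] by (simp add: fX_def Xvec_def prod_eq_iff)
qed

lemma cnot_circuit_gf2_invertible:
  assumes q: "cnot_circuit n q"
  shows "gf2_invertible n (\<lambda>k. fst (circuit_action q (Xvec k)))"
proof -
  have w: "wf_circuit n q" using cnot_circuit_wf[OF q] .
  have lt: "\<forall>k<n. fst (circuit_action q (Xvec k)) < 2^n" using circuit_action_less_exp[OF w] by (simp add: Xvec_def)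
  have "inj_on (gf2_apply n (\<lambda>k. fst (circuit_action q (Xvec k)))) {..<2^n}"
  proof (rule inj_onI)
    fix x y assume "x \<in> {..<2^n}" "y \<in> {..<2^n}" "gf2_apply n (\<lambda>k. fst (circuit_action q (Xvec k))) x = gf2_apply n (\<lambda>k. fst (circuit_action q (Xvec k))) y"
    then have "circuit_action q (x, 0) = circuit_action q (y, 0)" using cnot_circuit_X_action_gf2_apply[OF q] by simp
    then have "circuit_action (rev q) (circuit_action q (x, 0)) = circuit_action (rev q) (circuit_action q (y, 0))" by simp
    then show "x = y" using circuit_action_rev[OF w] by simp
  qed
  then show ?thesis using lt by (simp add: gf2_invertible_def)
qed

lemma cnot_circuit_action_eqI:
  assumes q: "cnot_circuit n q" and q': "cnot_circuit n q'" and X: "\<forall>k<n. circuit_action q (Xvec k) = circuit_action q' (Xvec k)" and v: "vbounded n v"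
  shows "circuit_action q v = circuit_action q' v"
proof -
  have w: "wf_circuit n q" and w': "wf_circuit n q'" using cnot_circuit_wf q q' by auto
  define f where "f x = circuit_action (rev q') (circuit_action q x)" for x
  have lin: "f (vxor x y) = vxor (f x) (f y)" for x y using circuit_action_vxor w w' by (simp add: f_def)
  have fx: "f (Xvec k) = Xvec k" if "k < n" for k using X that circuit_action_rev[OF w'] by (simp add: f_def)
  have fz: "f (Zvec k) = Zvec k" if k: "k < n" for k
  proof -
    obtain z where z: "circuit_action q (0, 2^k) = (0, z)" using cnot_circuit_Z_action[OF q, of "2^k"] by (metis prod.collapse)
    have f0: "fst (f (Zvec k)) = 0" unfolding f_def Zvec_def z
      using cnot_circuit_Z_action[of n "rev q'"] q' by simp
    have lt: "snd (f (Zvec k)) < 2^n" using circuit_action_less_exp[of n "rev q'"] circuit_action_less_exp[OF w, of 0 "2^k"] w' k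
      by (simp add: f_def Zvec_def) (metis prod.collapse)
    have "bt (snd (f (Zvec k))) j = (j = k)" if j: "j < n" for j
    proof -
      have "symp n (f (Zvec k)) (f (Xvec j)) = symp n (Zvec k) (Xvec j)"
        using symp_circuit_action[OF w, of "Zvec k" "Xvec j"] symp_circuit_action[of n "rev q'"] w' by (simp add: f_def)
      then have "symp n (f (Zvec k)) (Xvec j) = symp n (Zvec k) (Xvec j)" using fx[OF j] by simp
      then show ?thesis using symp_Xvec[OF j] j by (simp add: Zvec_def bit_exp_iff)
    qed
    then have "snd (f (Zvec k)) = 2^k" using lt k by (intro bit_eq_less_expI) (auto simp: bit_exp_iff)
    then show ?thesis using f0 by (simp add: Zvec_def prod_eq_iff)
  qed
  have "f v = v" by (rule vxor_hom_fixing_basis[OF lin fx fz v])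
  then have "circuit_action q' (f v) = circuit_action q' v" by simp
  then show ?thesis using circuit_action_rev'[OF w'] by (simp add: f_def)
qed

section \<open>Compressing CNOT-phase circuits\<close>

definition symmetric_gf2_map :: "nat \<Rightarrow> (nat \<Rightarrow> nat) \<Rightarrow> bool" where
  "symmetric_gf2_map n f = ((\<forall>x y. f (x XOR y) = f x XOR f y) \<and> (\<forall>x. f x < 2^n) \<and>
     (\<forall>x y. x < 2^n \<longrightarrow> y < 2^n \<longrightarrow> parity n (x AND f y) = parity n (y AND f x)))"

definition phase_shear :: "(nat \<Rightarrow> nat) \<Rightarrow> nat \<times> nat \<Rightarrow> nat \<times> nat" where
  "phase_shear f v = (fst v, snd v XOR f (fst v))"

lemma parity_and_cnot_transpose:
  assumes "c < n" "t < n" "c \<noteq> t"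
  shows "parity n (x AND cnot_map t c z) = parity n (cnot_map c t x AND z)"
proof -
  have "x AND cnot_map t c z = (cnot_map c t x AND z) XOR (if bt z t \<and> bt x c then 2^c XOR 2^t else 0)"
    by (rule bit_eqI) (use assms in \<open>auto simp: bit_cnot_map bit_and_iff bit_xor_iff bit_exp_iff\<close>)
  then show ?thesis using assms by (simp add: parity_xor parity_exp)
qed

lemma symmetric_gf2_map_add_diagonal:
  assumes f: "symmetric_gf2_map n f" and k: "k < n"
  shows "symmetric_gf2_map n (\<lambda>x. f x XOR (if bt x k then 2^k else 0))"
  unfolding symmetric_gf2_map_def
proof (intro conjI allI impI)
  fix x y
  show "f (x XOR y) XOR (if bt (x XOR y) k then 2^k else 0) =
      (f x XOR (if bt x k then 2^k else 0)) XOR (f y XOR (if bt y k then 2^k else 0))"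
    using f by (intro bit_eqI) (auto simp: symmetric_gf2_map_def bit_xor_iff bit_exp_iff)
  show "f x XOR (if bt x k then 2^k else 0) < 2^n" using f k by (simp add: symmetric_gf2_map_def)
  assume "x < 2^n" "y < 2^n"
  then show "parity n (x AND (f y XOR (if bt y k then 2^k else 0))) = parity n (y AND (f x XOR (if bt x k then 2^k else 0)))"
    using f k by (auto simp: symmetric_gf2_map_def and_xor_distrib parity_xor parity_and_exp)
qed

lemma symmetric_gf2_map_cnot_conj:
  assumes f: "symmetric_gf2_map n f" and ct: "c < n" "t < n" "c \<noteq> t"
  shows "symmetric_gf2_map n (\<lambda>x. cnot_map t c (f (cnot_map c t x)))"
  unfolding symmetric_gf2_map_def
proof (intro conjI allI impI)
  have fl: "f (x XOR y) = f x XOR f y" "f x < 2^n" for x y using f by (auto simp: symmetric_gf2_map_def)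
  fix x y
  show "cnot_map t c (f (cnot_map c t (x XOR y))) = cnot_map t c (f (cnot_map c t x)) XOR cnot_map t c (f (cnot_map c t y))"
    using ct by (simp add: cnot_map_xor fl)
  show "cnot_map t c (f (cnot_map c t x)) < 2^n" using fl ct by simp
  assume xy: "x < 2^n" "y < 2^n"
  have "parity n (x AND cnot_map t c (f (cnot_map c t y))) = parity n (cnot_map c t x AND f (cnot_map c t y))"
    by (rule parity_and_cnot_transpose[OF ct])
  also have "\<dots> = parity n (cnot_map c t y AND f (cnot_map c t x))"
    using f xy ct by (simp add: symmetric_gf2_map_def)
  also have "\<dots> = parity n (y AND cnot_map t c (f (cnot_map c t x)))"
    by (rule parity_and_cnot_transpose[OF ct, symmetric])
  finally show "parity n (x AND cnot_map t c (f (cnot_map c t y))) = parity n (y AND cnot_map t c (f (cnot_map c t x)))" .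
qed

lemma cs_circuit_structure:
  "cs_circuit n 0 p \<Longrightarrow> \<exists>q f. cnot_circuit n q \<and> symmetric_gf2_map n f \<and>
     (\<forall>v. circuit_action p v = phase_shear f (circuit_action q v))"
proof (induction p rule: rev_induct)
  case Nil
  show ?case by (intro exI[of _ "[]"] exI[of _ "\<lambda>x. 0"]) (auto simp: cnot_circuit_def symmetric_gf2_map_def phase_shear_def)
next
  case (snoc g p)
  have g: "cs_gate n 0 g" and p: "cs_circuit n 0 p" using snoc.prems by (auto simp: cs_circuit_def)
  obtain q f where q: "cnot_circuit n q" "symmetric_gf2_map n f" "\<forall>v. circuit_action p v = phase_shear f (circuit_action q v)"
    using snoc.IH[OF p] by blast
  show ?case
  proof (cases g)
    case (H k) then show ?thesis using g by (simp add: cs_gate_def)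
  next
    case (S k)
    have "circuit_action (p @ [g]) v = phase_shear (\<lambda>x. f x XOR (if bt x k then 2^k else 0)) (circuit_action q v)" for v
      using spec[OF q(3), of v] S by (cases "circuit_action q v") (simp add: circuit_action_append phase_shear_def xor.assoc)
    moreover have "symmetric_gf2_map n (\<lambda>x. f x XOR (if bt x k then 2^k else 0))"
      using symmetric_gf2_map_add_diagonal[OF q(2)] g S by (simp add: cs_gate_def)
    ultimately show ?thesis using q(1) by blast
  next
    case (CNOT c t)
    have ct: "c < n" "t < n" "c \<noteq> t" using g CNOT by (auto simp: cs_gate_def)
    have "circuit_action (p @ [g]) v = phase_shear (\<lambda>x. cnot_map t c (f (cnot_map c t x))) (circuit_action (q @ [CNOT c t]) v)" for v
      using spec[OF q(3), of v] CNOT ct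
      by (cases "circuit_action q v") (simp add: circuit_action_append phase_shear_def cnot_map_xor)
    moreover have "cnot_circuit n (q @ [CNOT c t])" using q(1) ct by (simp add: cnot_circuit_def)
    ultimately show ?thesis using symmetric_gf2_map_cnot_conj[OF q(2) ct] by blast
  qed
qed

text \<open>Since \<open>cl l\<close> has lowest bit \<open>l\<close>, the solution is found bit by bit from the top.\<close>
lemma solve_unitri_parities:
  assumes cl: "\<And>l. k < l \<Longrightarrow> l < n \<Longrightarrow> bt (cl l) l \<and> (\<forall>r<l. \<not> bt (cl l) r)" and kn: "k < n"
  shows "\<exists>x<2^n. (\<forall>r\<le>k. \<not> bt x r) \<and> (\<forall>l. k < l \<longrightarrow> l < n \<longrightarrow> parity n (x AND cl l) = B l)"
proof -
  have "\<exists>x<2^n. (\<forall>r<t. \<not> bt x r) \<and> (\<forall>l. t \<le> l \<longrightarrow> l < n \<longrightarrow> parity n (x AND cl l) = B l)"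
    if "Suc k \<le> t" "t \<le> n" for t
    using that(2)
  proof (induction rule: inc_induct)
    case base then show ?case by (intro exI[of _ 0]) auto
  next
    case (step j)
    then obtain x where x: "x < 2^n" "\<forall>r<Suc j. \<not> bt x r"
      "\<forall>l. Suc j \<le> l \<longrightarrow> l < n \<longrightarrow> parity n (x AND cl l) = B l" by auto
    have kj: "k < j" "j < n" using that(1) step.hyps by auto
    have cj: "bt (cl j) j" using cl[OF kj] by auto
    define x' where "x' = x XOR (if parity n (x AND cl j) \<noteq> B j then 2^j else 0)"
    have "parity n (x' AND cl l) = B l" if l: "j \<le> l" "l < n" for l
    proof (cases "l = j")
      case True
      then show ?thesis using cj kj by (auto simp: x'_def and_xor_distrib2 parity_xor parity_exp_and)
    next
      case False
      then have "\<not> bt (cl l) j" using cl[of l] kj l by auto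
      then show ?thesis using x(3) l False by (auto simp: x'_def and_xor_distrib2 parity_xor parity_exp_and)
    qed
    moreover have "x' < 2^n" using x(1) kj by (simp add: x'_def)
    moreover have "\<forall>r<j. \<not> bt x' r" using x(2) by (auto simp: x'_def bit_xor_iff bit_exp_iff)
    ultimately show ?case by blast
  qed
  from this[of "Suc k"] kn show ?thesis by (auto simp: less_Suc_eq_le)
qed

text \<open>Columns are constructed from the last one backwards; each new column is \<open>e\<^sub>k\<close> plus a
  solution of the triangular system for its parities with the later columns.\<close>
lemma exists_unitri_gram:
  "\<exists>cl. lower_unitri n cl \<and> (\<forall>l<n. cl l < 2^n) \<and>
     (\<forall>l1 l2. l1 < l2 \<longrightarrow> l2 < n \<longrightarrow> parity n (cl l1 AND cl l2) = B l1 l2)"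
proof -
  have "\<exists>cl. (\<forall>l. t \<le> l \<longrightarrow> l < n \<longrightarrow> cl l < 2^n \<and> bt (cl l) l \<and> (\<forall>r<l. \<not> bt (cl l) r)) \<and>
      (\<forall>l1 l2. t \<le> l1 \<longrightarrow> l1 < l2 \<longrightarrow> l2 < n \<longrightarrow> parity n (cl l1 AND cl l2) = B l1 l2)" if "t \<le> n" for t
    using that
  proof (induction t rule: inc_induct)
    case base then show ?case by auto
  next
    case (step k)
    then obtain cl where cl: "\<forall>l. Suc k \<le> l \<longrightarrow> l < n \<longrightarrow> cl l < 2^n \<and> bt (cl l) l \<and> (\<forall>r<l. \<not> bt (cl l) r)"
      "\<forall>l1 l2. Suc k \<le> l1 \<longrightarrow> l1 < l2 \<longrightarrow> l2 < n \<longrightarrow> parity n (cl l1 AND cl l2) = B l1 l2" by auto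
    obtain x where x: "x < 2^n" "\<forall>r\<le>k. \<not> bt x r" "\<forall>l. k < l \<longrightarrow> l < n \<longrightarrow> parity n (x AND cl l) = B k l"
      using solve_unitri_parities[of k n cl "B k"] cl(1) step(2) by auto
    define cl' where "cl' = cl(k := 2^k XOR x)"
    have "cl' l < 2^n \<and> bt (cl' l) l \<and> (\<forall>r<l. \<not> bt (cl' l) r)" if "k \<le> l" "l < n" for l
      using cl(1) x(1,2) that step(2) by (cases "l = k") (auto simp: cl'_def bit_xor_iff bit_exp_iff)
    moreover have "parity n (cl' l1 AND cl' l2) = B l1 l2" if l: "k \<le> l1" "l1 < l2" "l2 < n" for l1 l2
    proof (cases "l1 = k")
      case True
      have "\<not> bt (cl l2) k" using cl(1) l True by auto
      then show ?thesis using True l x(3) by (auto simp: cl'_def and_xor_distrib2 parity_xor parity_exp_and)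
    qed (use cl(2) l in \<open>auto simp: cl'_def\<close>)
    ultimately show ?case by blast
  qed
  from this[of 0] show ?thesis by (auto simp: lower_unitri_def)
qed

lemma cnot_circuit_rev_Z_action:
  assumes L: "cnot_circuit n L" and cl: "\<forall>k<n. circuit_action L (Xvec k) = (cl k, 0)" and y: "y < 2^n"
  shows "circuit_action (rev L) (0, y) = (0, of_bits n (\<lambda>k. parity n (y AND cl k)))"
proof -
  have w: "wf_circuit n L" using cnot_circuit_wf[OF L] .
  define z where "z = snd (circuit_action (rev L) (0, y))"
  have f0: "fst (circuit_action (rev L) (0, y)) = 0" using cnot_circuit_Z_action[of n "rev L"] L by simp
  have e: "circuit_action (rev L) (0, y) = (0, z)" using f0 by (simp add: z_def prod_eq_iff)
  have zlt: "z < 2^n" using circuit_action_less_exp[of n "rev L" 0 y] w y by (simp add: z_def)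
  have bz: "bt z k = parity n (y AND cl k)" if k: "k < n" for k
  proof -
    have "symp n (circuit_action L (0, z)) (circuit_action L (Xvec k)) = symp n (0, z) (Xvec k)" using symp_circuit_action[OF w] by simp
    moreover have "circuit_action L (0, z) = (0, y)" using circuit_action_rev'[OF w, of "(0,y)"] e by simp
    ultimately have "symp n (0, y) (cl k, 0) = bt z k" using cl k symp_Xvec[OF k, of "(0,z)"] by simp
    then show ?thesis by (simp add: symp_def symp_mask_def)
  qed
  have "z = of_bits n (\<lambda>k. parity n (y AND cl k))"
    by (rule bit_eq_less_expI[OF zlt of_bits_less_exp]) (simp add: bz bit_of_bits)
  then show ?thesis using e by simp
qed

lemma S_layer_action: "distinct ks \<Longrightarrow> circuit_action (map S ks) (x, y) = (x, y XOR (x AND mask ks))"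
proof (induction ks arbitrary: y)
  case Nil then show ?case by simp
next
  case (Cons k ks)
  have "gate_action (S k) (x, y) = (x, y XOR (x AND 2^k))"
    by (rule pair_bit_eqI) (auto simp: bit_xor_iff bit_and_iff bit_exp_iff)
  then show ?case using Cons by (simp add: and_xor_distrib xor.assoc)
qed

lemma parity_gf2_apply_and: "parity N (gf2_apply n A a AND y) = parity n (a AND of_bits n (\<lambda>l. parity N (A l AND y)))"
proof (induction n)
  case 0 then show ?case by simp
next
  case (Suc n)
  have "parity n (a AND of_bits (Suc n) (\<lambda>l. parity N (A l AND y))) = parity n (a AND of_bits n (\<lambda>l. parity N (A l AND y)))"
    by (rule parity_cong) (auto simp: bit_and_iff bit_of_bits bit_xor_iff bit_exp_iff)
  then show ?case using Suc by (auto simp: and_xor_distrib2 parity_xor bit_and_iff bit_of_bits bit_xor_iff bit_exp_iff)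
qed

lemma conj_S_layer_action:
  assumes L: "cnot_circuit n L" and cl: "\<forall>k<n. circuit_action L (Xvec k) = (cl k, 0)" and cllt: "\<forall>k<n. cl k < 2^n"
    and v: "a < 2^n" "b < 2^n"
  shows "circuit_action (L @ map S [0..<n] @ rev L) (a, b) = (a, b XOR of_bits n (\<lambda>k. parity n (gf2_apply n cl a AND cl k)))"
proof -
  have w: "wf_circuit n L" using cnot_circuit_wf[OF L] .
  have appeq: "gf2_apply n (\<lambda>k. fst (circuit_action L (Xvec k))) a = gf2_apply n cl a"
  proof -
    have "\<And>j. j \<le> n \<Longrightarrow> gf2_apply j (\<lambda>k. fst (circuit_action L (Xvec k))) a = gf2_apply j cl a"
    proof -
      fix j show "j \<le> n \<Longrightarrow> gf2_apply j (\<lambda>k. fst (circuit_action L (Xvec k))) a = gf2_apply j cl a"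
        by (induction j) (use cl in auto)
    qed
    then show ?thesis by simp
  qed
  have LX: "circuit_action L (a, 0) = (gf2_apply n cl a, 0)" using cnot_circuit_X_action_gf2_apply[OF L v(1)] appeq by simp
  obtain b' where LZ: "circuit_action L (0, b) = (0, b')" using cnot_circuit_Z_action[OF L, of b] by (metis prod.collapse)
  have Lab: "circuit_action L (a, b) = (gf2_apply n cl a, b')"
    using circuit_action_vxor[OF w, of "(a,0)" "(0,b)"] LX LZ by (simp add: vxor_def)
  have applt: "gf2_apply n cl a < 2^n" using gf2_apply_less_exp cllt by blast
  have xlid: "gf2_apply n cl a AND mask [0..<n] = gf2_apply n cl a"
    by (rule bit_eqI) (use applt in \<open>auto simp: bit_and_iff bit_mask dest: less_exp_bitD\<close>)
  have S: "circuit_action (map S [0..<n]) (gf2_apply n cl a, b') = (gf2_apply n cl a, b' XOR gf2_apply n cl a)"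
    by (simp add: S_layer_action xlid)
  have "circuit_action (rev L) (gf2_apply n cl a, b' XOR gf2_apply n cl a) = vxor (circuit_action (rev L) (gf2_apply n cl a, b')) (circuit_action (rev L) (0, gf2_apply n cl a))"
    using circuit_action_vxor[of n "rev L" "(gf2_apply n cl a, b')" "(0, gf2_apply n cl a)"] w by (simp add: vxor_def)
  also have "circuit_action (rev L) (gf2_apply n cl a, b') = (a, b)" using circuit_action_rev[OF w, of "(a,b)"] Lab by simp
  also have "circuit_action (rev L) (0, gf2_apply n cl a) = (0, of_bits n (\<lambda>k. parity n (gf2_apply n cl a AND cl k)))"
    by (rule cnot_circuit_rev_Z_action[OF L cl applt])
  finally show ?thesis using Lab S by (simp add: circuit_action_append vxor_def)
qed

lemma symmetric_gf2_map_column: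
  assumes f: "symmetric_gf2_map n f"
    and cl: "\<forall>l1 l2. l1 < l2 \<longrightarrow> l2 < n \<longrightarrow> parity n (cl l1 AND cl l2) = bt (f (2^l2)) l1" and k: "k < n"
  shows "f (2^k) = of_bits n (\<lambda>l. parity n (cl l AND cl k)) XOR
    (if parity n (cl k AND cl k) \<noteq> bt (f (2^k)) k then 2^k else 0)"
proof (rule bit_eq_less_expI)
  have fs: "x < 2^n \<Longrightarrow> y < 2^n \<Longrightarrow> parity n (x AND f y) = parity n (y AND f x)" for x y
    using f by (auto simp: symmetric_gf2_map_def)
  show "f (2^k) < 2^n" using f by (simp add: symmetric_gf2_map_def)
  show "of_bits n (\<lambda>l. parity n (cl l AND cl k)) XOR (if parity n (cl k AND cl k) \<noteq> bt (f (2^k)) k then 2^k else 0) < 2^n"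
    using k by (simp add: of_bits_less_exp)
  fix l assume l: "l < n"
  consider "l < k" | "l = k" | "k < l" by linarith
  then have "bt (f (2^k)) l = (parity n (cl l AND cl k) \<noteq> (parity n (cl k AND cl k) \<noteq> bt (f (2^k)) k \<and> l = k))"
  proof cases
    case 1
    then show ?thesis using cl k by simp
  next
    case 3
    have "bt (f (2^l)) k = bt (f (2^k)) l" using fs[of "2^k" "2^l"] l k by (simp add: parity_exp_and)
    moreover have "parity n (cl k AND cl l) = bt (f (2^l)) k" using cl l 3 by simp
    ultimately show ?thesis using 3 by (simp add: and.commute)
  qed auto
  then show "bt (f (2^k)) l = bt (of_bits n (\<lambda>l. parity n (cl l AND cl k)) XOR
      (if parity n (cl k AND cl k) \<noteq> bt (f (2^k)) k then 2^k else 0)) l"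
    using l by (auto simp: bit_of_bits bit_xor_iff bit_exp_iff)
qed

lemma symmetric_gf2_map_gram:
  assumes f: "symmetric_gf2_map n f"
    and cl: "\<forall>l1 l2. l1 < l2 \<longrightarrow> l2 < n \<longrightarrow> parity n (cl l1 AND cl l2) = bt (f (2^l2)) l1"
    and ks: "ks = filter (\<lambda>k. parity n (cl k AND cl k) \<noteq> bt (f (2^k)) k) [0..<n]" and a: "a < 2^n"
  shows "f a = of_bits n (\<lambda>k. parity n (gf2_apply n cl a AND cl k)) XOR (a AND mask ks)"
proof (rule bit_eq_less_expI)
  have fs: "x < 2^n \<Longrightarrow> y < 2^n \<Longrightarrow> parity n (x AND f y) = parity n (y AND f x)" for x y
    using f by (auto simp: symmetric_gf2_map_def)
  have dks: "distinct ks" by (simp add: ks)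
  have kset: "k \<in> set ks \<longleftrightarrow> k < n \<and> parity n (cl k AND cl k) \<noteq> bt (f (2^k)) k" for k by (auto simp: ks)
  show "f a < 2^n" using f by (simp add: symmetric_gf2_map_def)
  show "of_bits n (\<lambda>k. parity n (gf2_apply n cl a AND cl k)) XOR (a AND mask ks) < 2^n"
    using xor_less_exp[OF of_bits_less_exp and_less_exp_left[OF a]] .
  fix k assume k: "k < n"
  have "bt (f a) k = parity n (2^k AND f a)" using k by (simp add: parity_exp_and)
  also have "\<dots> = parity n (a AND f (2^k))" using fs[of "2^k" a] a k by simp
  also have "\<dots> = (parity n (a AND of_bits n (\<lambda>l. parity n (cl l AND cl k))) \<noteq>
      (parity n (cl k AND cl k) \<noteq> bt (f (2^k)) k \<and> bt a k))"
    using k by (subst symmetric_gf2_map_column[OF f cl k]) (simp add: and_xor_distrib parity_xor parity_and_exp)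
  also have "parity n (a AND of_bits n (\<lambda>l. parity n (cl l AND cl k))) = parity n (gf2_apply n cl a AND cl k)"
    by (simp add: parity_gf2_apply_and)
  finally show "bt (f a) k = bt (of_bits n (\<lambda>k. parity n (gf2_apply n cl a AND cl k)) XOR (a AND mask ks)) k"
    using k by (auto simp: bit_of_bits bit_xor_iff bit_and_iff bit_mask[OF dks] kset)
qed

lemma symmetric_phase_circuit:
  assumes f: "symmetric_gf2_map n f" and m: "1 \<le> m"
  shows "\<exists>g. wf_circuit n g \<and> length g \<le> 2 * pmh_bound n m + n + n \<and>
    (\<forall>a b. a < 2^n \<longrightarrow> b < 2^n \<longrightarrow> circuit_action g (a, b) = (a, b XOR f a))"
proof -
  obtain cl where cl: "lower_unitri n cl" "\<forall>k<n. cl k < 2^n"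
      "\<forall>l1 l2. l1 < l2 \<longrightarrow> l2 < n \<longrightarrow> parity n (cl l1 AND cl l2) = bt (f (2^l2)) l1"
    using exists_unitri_gram[of n "\<lambda>l1 l2. bt (f (2^l2)) l1"] by blast
  obtain L where L: "cnot_circuit n L" "length L \<le> pmh_bound n m" "\<forall>k<n. circuit_action L (Xvec k) = (cl k, 0)"
    using pmh_cnot_synthesis[OF lower_unitri_invertible[OF cl(1,2)] m] by (auto simp: pmh_bound_def)
  define ks where "ks = filter (\<lambda>k. parity n (cl k AND cl k) \<noteq> bt (f (2^k)) k) [0..<n]"
  define g where "g = (L @ map S [0..<n] @ rev L) @ map S ks"
  have "circuit_action g (a, b) = (a, b XOR f a)" if ab: "a < 2^n" "b < 2^n" for a b
    using conj_S_layer_action[OF L(1) L(3) cl(2) ab] symmetric_gf2_map_gram[OF f cl(3) ks_def ab(1)]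
    by (simp add: g_def circuit_action_append S_layer_action ks_def xor.assoc)
  moreover have "wf_circuit n g" using cnot_circuit_wf[OF L(1)]
    by (auto simp: g_def wf_circuit_def wf_gate_def ks_def)
  moreover have "length ks \<le> length [0..<n]" unfolding ks_def by (rule length_filter_le)
  then have "length g \<le> 2 * pmh_bound n m + n + n" using L(2) by (simp add: g_def)
  ultimately show ?thesis unfolding same_action_def by blast
qed

lemma cs_circuit_compress:
  assumes p: "cs_circuit n 0 p" and m: "1 \<le> m"
  shows "\<exists>p'. wf_circuit n p' \<and> length p' \<le> 3 * pmh_bound n m + 2 * n \<and> same_action n p' p"
proof -
  obtain q f where q: "cnot_circuit n q" "symmetric_gf2_map n f"
      "\<forall>v. circuit_action p v = phase_shear f (circuit_action q v)"
    using cs_circuit_structure[OF p] by blast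
  obtain q' where q': "cnot_circuit n q'" "length q' \<le> pmh_bound n m"
      "\<forall>k<n. circuit_action q' (Xvec k) = (fst (circuit_action q (Xvec k)), 0)"
    using pmh_cnot_synthesis[OF cnot_circuit_gf2_invertible[OF q(1)] m] by (auto simp: pmh_bound_def)
  have "\<forall>k<n. circuit_action q (Xvec k) = circuit_action q' (Xvec k)"
    using q'(3) cnot_circuit_X_action[OF q(1)] by (auto simp: Xvec_def prod_eq_iff)
  then have qq': "circuit_action q' v = circuit_action q v" if "vbounded n v" for v
    using cnot_circuit_action_eqI[OF q(1) q'(1) _ that] by simp
  obtain g where g: "wf_circuit n g" "length g \<le> 2 * pmh_bound n m + n + n"
      "\<forall>a b. a < 2^n \<longrightarrow> b < 2^n \<longrightarrow> circuit_action g (a, b) = (a, b XOR f a)"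
    using symmetric_phase_circuit[OF q(2) m] by blast
  have "circuit_action (q' @ g) v = circuit_action p v" if v: "vbounded n v" for v
  proof -
    obtain a b where ab: "circuit_action q v = (a, b)" by fastforce
    then have "a < 2^n" "b < 2^n"
      using vbounded_circuit_action[OF cnot_circuit_wf[OF q(1)] v] by (auto simp: vbounded_def)
    then show ?thesis using g(3) spec[OF q(3), of v] by (simp add: circuit_action_append qq'[OF v] ab phase_shear_def)
  qed
  moreover have "wf_circuit n (q' @ g)" using cnot_circuit_wf[OF q'(1)] g(1) by simp
  moreover have "length (q' @ g) \<le> 3 * pmh_bound n m + 2 * n" using q'(2) g(2) by simp
  ultimately show ?thesis unfolding same_action_def by blast
qed

lemma short_equivalent_circuit:
  assumes wc: "wf_circuit n c" and m: "1 \<le> m"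
  shows "\<exists>c'. wf_circuit n c' \<and> equiv_circuits n c c' \<and> length c' \<le> 6 * pmh_bound n m + 11 * n"
proof -
  obtain p1 hs p2 where P: "cs_circuit n 0 p1" "cs_circuit n 0 p2" "H_layer n 0 hs" "length hs \<le> n"
      "same_action n c (p2 @ hs @ p1)"
    using action_normal_form[of 0 n c] wc by (auto simp: fixes_below_def)
  obtain p1' where p1': "wf_circuit n p1'" "length p1' \<le> 3 * pmh_bound n m + 2 * n" "same_action n p1' p1"
    using cs_circuit_compress[OF P(1) m] by blast
  obtain p2' where p2': "wf_circuit n p2'" "length p2' \<le> 3 * pmh_bound n m + 2 * n" "same_action n p2' p2"
    using cs_circuit_compress[OF P(2) m] by blast
  have hs: "wf_circuit n hs" using P(3) by (auto simp: H_layer_def wf_circuit_def wf_gate_def)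
  define d where "d = p2' @ hs @ p1'"
  have "same_action n d (p2 @ hs @ p1)"
    unfolding d_def using p2' hs p1'(3)
    by (intro same_action_append) (auto simp: same_action_def)
  then have "same_action n c d" using P(5) by (simp add: same_action_def)
  moreover have wd: "wf_circuit n d" using p1'(1) p2'(1) hs by (simp add: d_def)
  ultimately obtain p where p: "wf_circuit n p" "length p \<le> 6 * n" "equiv_circuits n c (p @ d)"
    using equiv_of_same_action[OF wc] by blast
  moreover have "length (p @ d) \<le> 6 * pmh_bound n m + 11 * n"
    using p(2) p1'(2) p2'(2) P(4) by (simp add: d_def)
  ultimately show ?thesis using wd by (intro exI[of _ "p @ d"]) simp
qed

lemma ln_4_le_3: "ln (4::real) \<le> 3"
  using ln_le_minus_one[of "4::real"] by simp

lemma exists_block_width: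
  assumes n: "2 \<le> n"
  shows "\<exists>m\<ge>1. m * (m + 2^m) \<le> 2 * n \<and> m \<le> n \<and> ln (real n) \<le> 6 * real m"
proof -
  have "n < 2^n" by (rule less_exp)
  also have "(2::nat)^n \<le> 4^n" by (rule power_mono) auto
  also have "(4::nat)^n \<le> 4 ^ Suc n" by simp
  finally have "\<exists>k. n < 4 ^ Suc k" ..
  define k where "k = (LEAST k. n < 4 ^ Suc k)"
  have up: "n < 4 ^ Suc k" unfolding k_def by (rule LeastI_ex) fact
  define m where "m = max 1 k"
  have "ln (real n) < ln (real (4 ^ Suc k))" using up n by (simp del: power_Suc)
  also have "\<dots> = real (Suc k) * ln 4" by (simp add: ln_realpow del: power_Suc)
  also have "\<dots> \<le> real (Suc k) * 3" using ln_4_le_3 by (intro mult_left_mono) auto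
  also have "\<dots> \<le> 6 * real m" by (simp add: m_def)
  finally have ln: "ln (real n) \<le> 6 * real m" by simp
  show ?thesis
  proof (cases "k = 0")
    case True
    then show ?thesis using n ln by (intro exI[of _ m]) (simp add: m_def)
  next
    case False
    have "\<not> n < 4 ^ Suc (k - 1)" unfolding k_def by (rule not_less_Least) (use False in \<open>simp add: k_def\<close>)
    then have low: "2^m * 2^m \<le> n" using False by (simp add: m_def power_mult_distrib[symmetric])
    have mle: "m \<le> 2^m" using less_exp[of m] by simp
    have "m * (m + 2^m) = m * m + m * 2^m" by (simp add: algebra_simps)
    also have "\<dots> \<le> 2^m * 2^m + 2^m * 2^m" by (intro add_mono mult_le_mono mle le_refl)
    finally have "m * (m + 2^m) \<le> 2 * n" using low by linarith
    moreover have "(2::nat)^m \<le> 2^m * 2^m" by simp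
    then have "m \<le> n" using mle low by linarith
    ultimately show ?thesis using ln by (intro exI[of _ m]) (auto simp: m_def)
  qed
qed

lemma pmh_bound_mult_le:
  assumes m: "m \<le> n" "m * (m + 2^m) \<le> 2 * n"
  shows "pmh_bound n m * m \<le> 12 * n^2"
proof -
  have "(n + m - 1) div m * m \<le> 2 * n" using div_times_less_eq_dividend[of "n + m - 1" m] m by linarith
  moreover have "pmh_bound n m * m = 2 * ((n + m - 1) div m * m) * (n + m * (m + 2^m))"
    by (simp add: pmh_bound_def algebra_simps)
  ultimately have "pmh_bound n m * m \<le> 2 * (2 * n) * (n + 2 * n)"
    using m(2) by (metis add_le_mono le_refl mult_le_mono)
  then show ?thesis by (simp add: power2_eq_square)
qed

lemma pmh_bound_le:
  assumes n: "2 \<le> n"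
  shows "\<exists>m\<ge>1. real (6 * pmh_bound n m + 11 * n) \<le> 500 * real n ^ 2 / ln (real n)"
proof -
  obtain m where m: "1 \<le> m" "m * (m + 2^m) \<le> 2 * n" "m \<le> n" "ln (real n) \<le> 6 * real m"
    using exists_block_width[OF n] by blast
  define T where "T = 6 * pmh_bound n m + 11 * n"
  have "T * m = 6 * (pmh_bound n m * m) + 11 * (n * m)" by (simp add: T_def algebra_simps)
  also have "\<dots> \<le> 6 * (12 * n^2) + 11 * (n * n)"
    by (rule add_mono[OF mult_le_mono[OF le_refl pmh_bound_mult_le[OF m(3,2)]]
          mult_le_mono[OF le_refl mult_le_mono[OF le_refl m(3)]]])
  finally have "T * m \<le> 6 * (12 * n^2) + 11 * (n * n)" .
  then have Tm: "real T * real m \<le> 83 * real n ^ 2"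
    by (simp add: power2_eq_square flip: of_nat_mult of_nat_le_iff)
  have "real T * ln (real n) \<le> real T * (6 * real m)" by (rule mult_left_mono[OF m(4)]) simp
  also have "\<dots> \<le> 500 * real n ^ 2" using Tm by (simp add: mult.assoc) (smt (verit) zero_le_power2)
  finally have "real T * ln (real n) \<le> 500 * real n ^ 2" .
  moreover have "0 < ln (real n)" using n by simp
  ultimately show ?thesis using m(1) by (intro exI[of _ m]) (simp add: T_def pos_le_divide_eq)
qed

theorem corollary9:
  shows "\<exists>C::real. C > 0 \<and> (\<forall>n::nat. n \<ge> 2 \<longrightarrow> (\<forall>c. wf_circuit n c \<longrightarrow>
     (\<exists>c'. wf_circuit n c' \<and> equiv_circuits n c c' \<and>
           real (length c') \<le> C * real n ^ 2 / ln (real n))))"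
proof (intro exI[of _ 500] conjI allI impI)
  fix n :: nat and c assume n: "2 \<le> n" and wc: "wf_circuit n c"
  obtain m where m: "1 \<le> m" "real (6 * pmh_bound n m + 11 * n) \<le> 500 * real n ^ 2 / ln (real n)"
    using pmh_bound_le[OF n] by blast
  obtain c' where c': "wf_circuit n c'" "equiv_circuits n c c'" "length c' \<le> 6 * pmh_bound n m + 11 * n"
    using short_equivalent_circuit[OF wc m(1)] by blast
  have "real (length c') \<le> real (6 * pmh_bound n m + 11 * n)" using c'(3) by linarith
  then show "\<exists>c'. wf_circuit n c' \<and> equiv_circuits n c c' \<and> real (length c') \<le> 500 * real n ^ 2 / ln (real n)"
    using c' m(2) by (intro exI[of _ c']) auto
qed simp

end
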